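(* For any $\lambda>0$ there exist $\delta_0>0$ and $n_0$ such that, for any $\delta<\delta_0$ and $n\ge n_0$, a (suitably parametrized) version of the \textsc{Approximate Best Arm} algorithm $(\epsilon,\delta)$-learns a best arm among any $n$ arms, with sample complexity at most $\big(2+\lambda\big)\frac{n}{\epsilon^2}\log\frac{1}{\delta}$.
   Context: Setting: a set of $n$ arms; each arm $a$ has an unknown distribution supported on $[0,1]$ with mean $\mu(a)$; sampling returns an independent draw. $a^\star\in\arg\max_a\mu(a)$; an $\epsilon$-best arm is an arm $a$ with $\mu(a)\ge\mu(a^\star)-\epsilon$. An algorithm $(\epsilon,\delta)$-learns a best arm if on every such instance it outputs an $\epsilon$-best arm with probability at least $1-\delta$; its sample complexity is the worst-case total number of samples taken (integer rounding ignored). $\log$ is natural. The \textsc{Approximate Best Arm} algorithm with parameter $\alpha\in(0,1)$: choose a uniformly random set $R$ of $\frac{n^{7/8}}{2}$ arms; run an elimination procedure that repeatedly samples all surviving arms (in round $i=0,1,\ldots$ each arm $(i+1)\lceil\frac{2}{(\alpha\epsilon)^2}\log\frac{1}{\delta'}\rceil$ times, $\delta'$ a confidence parameter) and keeps only a $(\delta'+\phi)$-fraction of arms with largest empirical means until about $\frac{n^{3/4}}{2}$ arms $A_T$ remain (here $\phi$ is a vanishing function of $n$); then sample each arm of $A_T\cup R$ $\frac{2}{((1-\alpha)\epsilon)^2}\log\frac{|A_T\cup R|}{\delta''}$ times and output the one with largest empirical mean. The parameters $\alpha,\delta',\delta'',\phi$ may be chosen depending on $n$, $\delta$ and $\lambda$.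 *)

theory Defs
  imports "HOL-Probability.Probability"
begin

definition bandit_instance :: "nat \<Rightarrow> (nat \<Rightarrow> real measure) \<Rightarrow> bool" where
  "bandit_instance n D \<longleftrightarrow>
     (\<forall>a<n. prob_space (D a) \<and> sets (D a) = sets borel \<and> (AE x in D a. 0 \<le> x \<and> x \<le> 1))"

definition arm_mean :: "(nat \<Rightarrow> real measure) \<Rightarrow> nat \<Rightarrow> real" where
  "arm_mean D a = integral\<^sup>L (D a) (\<lambda>x. x)"

definition best_mean :: "nat \<Rightarrow> (nat \<Rightarrow> real measure) \<Rightarrow> real" where
  "best_mean n D = Max (arm_mean D ` {..<n})"

text \<open>Randomness: a uniformly random set R of floor(n^(7/8)/2) arms, and a table X of samples,
  X (a,k) being the k-th sample of arm a; all samples are independent, X (a,k) distributed as D a.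
  Every round and the final stage use fresh samples (a global offset into the table).\<close>

definition rand_set_size :: "nat \<Rightarrow> nat" where
  "rand_set_size n = nat \<lfloor>real n powr (7/8) / 2\<rfloor>"

definition rand_sets :: "nat \<Rightarrow> nat set set" where
  "rand_sets n = {R. R \<subseteq> {..<n} \<and> card R = rand_set_size n}"

text \<open>k arms of S with the largest values of f (ties broken towards smaller index).\<close>
definition top_k :: "nat \<Rightarrow> (nat \<Rightarrow> real) \<Rightarrow> nat set \<Rightarrow> nat set" where
  "top_k k f S = set (take k (sort_key (\<lambda>a. - f a) (sorted_list_of_set S)))"

definition round_size :: "nat \<Rightarrow> real \<Rightarrow> nat \<Rightarrow> nat" where
  "round_size n p i = ((\<lambda>m. nat \<lfloor>p * real m\<rfloor>) ^^ i) n"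

definition num_rounds :: "nat \<Rightarrow> real \<Rightarrow> nat" where
  "num_rounds n p = (LEAST i. real (round_size n p i) \<le> real n powr (3/4) / 2)"

definition round_samples :: "real \<Rightarrow> real \<Rightarrow> real \<Rightarrow> nat \<Rightarrow> nat" where
  "round_samples \<alpha> \<delta>' \<epsilon> i = (i + 1) * nat \<lceil>2 / (\<alpha> * \<epsilon>)\<^sup>2 * ln (1 / \<delta>')\<rceil>"

definition round_offset :: "real \<Rightarrow> real \<Rightarrow> real \<Rightarrow> nat \<Rightarrow> nat" where
  "round_offset \<alpha> \<delta>' \<epsilon> i = (\<Sum>j<i. round_samples \<alpha> \<delta>' \<epsilon> j)"

definition emp_mean :: "(nat \<times> nat \<Rightarrow> real) \<Rightarrow> nat \<Rightarrow> nat \<Rightarrow> nat \<Rightarrow> real" where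
  "emp_mean X off m a = (\<Sum>k<m. X (a, off + k)) / real m"

fun surv :: "nat \<Rightarrow> real \<Rightarrow> real \<Rightarrow> real \<Rightarrow> real \<Rightarrow> (nat \<times> nat \<Rightarrow> real) \<Rightarrow> nat \<Rightarrow> nat set" where
  "surv n \<alpha> \<delta>' \<phi> \<epsilon> X 0 = {..<n}"
| "surv n \<alpha> \<delta>' \<phi> \<epsilon> X (Suc i) =
     top_k (round_size n (\<delta>' + \<phi>) (Suc i))
       (emp_mean X (round_offset \<alpha> \<delta>' \<epsilon> i) (round_samples \<alpha> \<delta>' \<epsilon> i))
       (surv n \<alpha> \<delta>' \<phi> \<epsilon> X i)"

definition final_set :: "nat \<Rightarrow> real \<Rightarrow> real \<Rightarrow> real \<Rightarrow> real \<Rightarrow> nat set \<Rightarrow> (nat \<times> nat \<Rightarrow> real) \<Rightarrow> nat set" where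
  "final_set n \<alpha> \<delta>' \<phi> \<epsilon> R X = surv n \<alpha> \<delta>' \<phi> \<epsilon> X (num_rounds n (\<delta>' + \<phi>)) \<union> R"

definition final_samples :: "real \<Rightarrow> real \<Rightarrow> real \<Rightarrow> nat \<Rightarrow> nat" where
  "final_samples \<alpha> \<delta>'' \<epsilon> s = nat \<lceil>2 / ((1 - \<alpha>) * \<epsilon>)\<^sup>2 * ln (real s / \<delta>'')\<rceil>"

definition aba_output ::
  "nat \<Rightarrow> real \<Rightarrow> real \<Rightarrow> real \<Rightarrow> real \<Rightarrow> real \<Rightarrow> nat set \<Rightarrow> (nat \<times> nat \<Rightarrow> real) \<Rightarrow> nat" where
  "aba_output n \<alpha> \<delta>' \<delta>'' \<phi> \<epsilon> R X =
     (let U = final_set n \<alpha> \<delta>' \<phi> \<epsilon> R X;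
          off = round_offset \<alpha> \<delta>' \<epsilon> (num_rounds n (\<delta>' + \<phi>));
          m = final_samples \<alpha> \<delta>'' \<epsilon> (card U)
      in hd (sort_key (\<lambda>a. - emp_mean X off m a) (sorted_list_of_set U)))"

definition aba_samples ::
  "nat \<Rightarrow> real \<Rightarrow> real \<Rightarrow> real \<Rightarrow> real \<Rightarrow> real \<Rightarrow> nat set \<Rightarrow> (nat \<times> nat \<Rightarrow> real) \<Rightarrow> nat" where
  "aba_samples n \<alpha> \<delta>' \<delta>'' \<phi> \<epsilon> R X =
     (let T = num_rounds n (\<delta>' + \<phi>); U = final_set n \<alpha> \<delta>' \<phi> \<epsilon> R X
      in (\<Sum>i<T. card (surv n \<alpha> \<delta>' \<phi> \<epsilon> X i) * round_samples \<alpha> \<delta>' \<epsilon> i)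
         + card U * final_samples \<alpha> \<delta>'' \<epsilon> (card U))"

definition aba_space :: "nat \<Rightarrow> (nat \<Rightarrow> real measure) \<Rightarrow> (nat set \<times> (nat \<times> nat \<Rightarrow> real)) measure" where
  "aba_space n D = measure_pmf (pmf_of_set (rand_sets n)) \<Otimes>\<^sub>M
                   PiM ({..<n} \<times> UNIV) (\<lambda>(a, k). D a)"

definition aba_learns ::
  "nat \<Rightarrow> real \<Rightarrow> real \<Rightarrow> real \<Rightarrow> real \<Rightarrow> real \<Rightarrow> real \<Rightarrow> (nat \<Rightarrow> real measure) \<Rightarrow> bool" where
  "aba_learns n \<alpha> \<delta>' \<delta>'' \<phi> \<epsilon> \<delta> D \<longleftrightarrow>
     measure (aba_space n D)
       {\<omega> \<in> space (aba_space n D).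
          arm_mean D (aba_output n \<alpha> \<delta>' \<delta>'' \<phi> \<epsilon> (fst \<omega>) (snd \<omega>)) \<ge> best_mean n D - \<epsilon>}
     \<ge> 1 - \<delta>"

end

theory Submission
  imports Defs "HOL-Real_Asymp.Real_Asymp"
begin

text \<open>In round i every surviving arm is sampled about (i+1) 2/(alpha eps)^2 ln(1/delta')
  times, so by Hoeffding's inequality a best arm falls below the threshold mu* - alpha eps/2 with
  probability at most delta'^(i+1), and so does a bad arm (more than alpha eps below mu*) rise
  above it. If a best arm is discarded, every survivor is good or a lucky bad arm; by independence
  the lucky bad arms are few (a binomial bound for a single round, Hoeffding's inequality for the
  count otherwise), so a good arm survives unless good arms are so numerous that the random set R
  contains one. In the final stage every estimate is within (1 - alpha) eps/2 of its mean, so the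
  output is eps-best.

  Keeping a p-fraction per round, the elimination costs at most n/(1 - p)^2 (2/(alpha eps)^2
  ln(1/delta') + 1) samples; with alpha = 1 - p0, p <= p0 and delta' = delta/8 this is
  (2 + lam/2) n/eps^2 ln(1/delta) up to lower order terms, while the final stage handles only
  O(n^(7/8)) arms. If n^2 delta <= 4 a single round keeping n^(3/4)/2 arms suffices; otherwise the
  algorithm keeps the fraction p0 in every round.\<close>

lemma two_mult_le_two_power: "2 * real n \<le> 2 ^ n"
proof (induction n)
  case (Suc n)
  then show ?case using one_le_power[of "2::real" n] by (cases n) auto
qed simp

lemma sum_power_Suc_le:
  fixes x :: real
  assumes "0 \<le> x" "x \<le> 1/2"
  shows "(\<Sum>i<N. x ^ Suc i) \<le> 2 * x"
proof -
  have "(\<Sum>i<N. x ^ i) = (1 - x ^ N) / (1 - x)" using assms by (simp add: sum_gp_strict)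
  also have "\<dots> \<le> 1 / (1 - x)" using assms by (simp add: divide_right_mono)
  also have "\<dots> \<le> 2" using assms by (simp add: field_simps)
  finally have "x * (\<Sum>i<N. x ^ i) \<le> x * 2" using assms by (intro mult_left_mono)
  then show ?thesis by (simp add: sum_distrib_left mult.commute)
qed

lemma sum_Suc_mult_power_closed_form:
  fixes x :: real
  shows "(\<Sum>i<N. real (Suc i) * x ^ i) * (1 - x)\<^sup>2 = 1 - real (Suc N) * x ^ N + real N * x ^ Suc N"
proof (induction N)
  case (Suc N)
  have "(\<Sum>i<Suc N. real (Suc i) * x ^ i) * (1 - x)\<^sup>2
      = (\<Sum>i<N. real (Suc i) * x ^ i) * (1 - x)\<^sup>2 + real (Suc N) * x ^ N * (1 - x)\<^sup>2"
    by (simp add: algebra_simps)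
  also have "\<dots> = 1 - real (Suc (Suc N)) * x ^ Suc N + real (Suc N) * x ^ Suc (Suc N)"
    unfolding Suc.IH by (simp add: power2_eq_square algebra_simps)
  finally show ?case .
qed simp

lemma sum_Suc_mult_power_le:
  fixes x :: real
  assumes "0 \<le> x" "x < 1"
  shows "(\<Sum>i<N. real (Suc i) * x ^ i) \<le> 1 / (1 - x)\<^sup>2"
proof -
  have "real N * x \<le> real N" using assms by (simp add: mult_left_le)
  then have "x ^ N * (real N * x - real N - 1) \<le> 0"
    using assms by (simp add: mult_nonneg_nonpos)
  then have "(\<Sum>i<N. real (Suc i) * x ^ i) * (1 - x)\<^sup>2 \<le> 1"
    unfolding sum_Suc_mult_power_closed_form by (simp add: algebra_simps)
  then show ?thesis using assms by (simp add: field_simps)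
qed

section \<open>Selection by empirical means\<close>

lemma top_k_subset: "top_k k f S \<subseteq> S"
  unfolding top_k_def by (cases "finite S") (auto dest: in_set_takeD)

lemma card_top_k: "card (top_k k f S) = min k (card S)"
  unfolding top_k_def by (cases "finite S") (auto simp: distinct_card)

lemma top_k_ge_discarded:
  assumes "a \<in> S" "a \<notin> top_k k f S" "b \<in> top_k k f S"
  shows "f a \<le> f b"
proof -
  define ys where "ys = sort_key (\<lambda>a. - f a) (sorted_list_of_set S)"
  have "finite S"
    using assms(3) unfolding top_k_def by (cases "finite S") auto
  then have "a \<in> set (drop k ys)"
    using assms(1,2) unfolding top_k_def ys_def[symmetric]
    by (metis Un_iff append_take_drop_id set_append set_sort set_sorted_list_of_set ys_def)
  moreover have "b \<in> set (take k ys)"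
    using assms(3) unfolding top_k_def ys_def by simp
  moreover have "sorted (map (\<lambda>a. - f a) (take k ys) @ map (\<lambda>a. - f a) (drop k ys))"
    by (metis append_take_drop_id map_append sorted_sort_key ys_def)
  ultimately show ?thesis unfolding sorted_append by fastforce
qed

lemma hd_sort_key_uminus:
  fixes f :: "'a::linorder \<Rightarrow> real"
  assumes "finite U" "U \<noteq> {}"
  shows "hd (sort_key (\<lambda>a. - f a) (sorted_list_of_set U)) \<in> U"
    and "b \<in> U \<Longrightarrow> f b \<le> f (hd (sort_key (\<lambda>a. - f a) (sorted_list_of_set U)))"
proof -
  define ys where "ys = sort_key (\<lambda>a. - f a) (sorted_list_of_set U)"
  have sorted: "sorted (map (\<lambda>a. - f a) ys)" unfolding ys_def by (rule sorted_sort_key)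
  have set: "set ys = U" using assms unfolding ys_def by simp
  then obtain y zs where ys: "ys = y # zs" using assms by (cases ys) auto
  show "hd (sort_key (\<lambda>a. - f a) (sorted_list_of_set U)) \<in> U"
    using set ys ys_def by auto
  assume "b \<in> U"
  then show "f b \<le> f (hd (sort_key (\<lambda>a. - f a) (sorted_list_of_set U)))"
    using set sorted unfolding ys_def[symmetric] ys by auto
qed

section \<open>Sizes of the elimination rounds\<close>

lemma round_size_0 [simp]: "round_size n p 0 = n"
  by (simp add: round_size_def)

lemma round_size_Suc: "round_size n p (Suc i) = nat \<lfloor>p * real (round_size n p i)\<rfloor>"
  by (simp add: round_size_def)

lemma round_size_Suc_le:
  assumes "0 \<le> p" "p \<le> 1"
  shows "round_size n p (Suc i) \<le> round_size n p i"
proof -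
  have "p * real (round_size n p i) \<le> real (round_size n p i)"
    using assms by (simp add: mult_left_le_one_le)
  then show ?thesis unfolding round_size_Suc by linarith
qed

lemma round_size_antimono:
  assumes "0 \<le> p" "p \<le> 1" "i \<le> j"
  shows "round_size n p j \<le> round_size n p i"
  using assms(3)
proof (induction j)
  case (Suc j)
  then show ?case using round_size_Suc_le[OF assms(1,2), of n j] le_Suc_eq by fastforce
qed simp

lemma round_size_le_power:
  assumes "0 \<le> p"
  shows "real (round_size n p i) \<le> p ^ i * real n"
proof (induction i)
  case (Suc i)
  have "real (round_size n p (Suc i)) \<le> p * real (round_size n p i)"
    unfolding round_size_Suc using assms by simp
  also have "\<dots> \<le> p * (p ^ i * real n)" using Suc assms by (simp add: mult_left_mono)
  finally show ?case by simp
qed simp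

text \<open>Each rounding loses less than one arm and earlier losses shrink by the factor p,
  so for p \<le> 1/2 the total loss stays below two.\<close>

lemma power_le_round_size_add_2:
  assumes "0 \<le> p" "p \<le> 1/2"
  shows "p ^ i * real n \<le> real (round_size n p i) + 2"
proof (induction i)
  case (Suc i)
  have "p * real (round_size n p i) - 1 \<le> real (round_size n p (Suc i))"
    unfolding round_size_Suc using assms by linarith
  moreover have "p * (p ^ i * real n) \<le> p * (real (round_size n p i) + 2)"
    using Suc assms by (simp add: mult_left_mono)
  ultimately show ?case using assms by (simp add: algebra_simps)
qed simp

lemma round_size_after_n_rounds_le:
  assumes "0 \<le> p" "p \<le> 1/2"
  shows "real (round_size n p n) \<le> real n powr (3/4) / 2"
proof (cases "n = 0")
  case False
  have "real (round_size n p n) \<le> (1/2) ^ n * real n"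
    using round_size_le_power[OF assms(1)] assms
    by (meson mult_right_mono of_nat_0_le_iff order.trans power_mono)
  also have "\<dots> \<le> 1/2"
    using two_mult_le_two_power[of n] by (simp add: field_simps)
  also have "\<dots> \<le> real n powr (3/4) / 2"
    using False by (simp add: ge_one_powr_ge_zero)
  finally show ?thesis .
qed simp

lemma round_size_num_rounds_le:
  assumes "0 \<le> p" "p \<le> 1/2"
  shows "real (round_size n p (num_rounds n p)) \<le> real n powr (3/4) / 2"
  unfolding num_rounds_def by (rule LeastI[of _ n]) (rule round_size_after_n_rounds_le[OF assms])

lemma num_rounds_le:
  assumes "0 \<le> p" "p \<le> 1/2"
  shows "num_rounds n p \<le> n"
  unfolding num_rounds_def by (rule Least_le) (rule round_size_after_n_rounds_le[OF assms])

lemma round_size_gt_before_num_rounds: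
  assumes "i < num_rounds n p"
  shows "real n powr (3/4) / 2 < real (round_size n p i)"
  using not_less_Least[OF assms[unfolded num_rounds_def]] by simp

lemma num_rounds_pos:
  assumes "0 \<le> p" "p \<le> 1/2" "n \<ge> 1"
  shows "0 < num_rounds n p"
proof (rule ccontr)
  assume "\<not> 0 < num_rounds n p"
  then have "real n \<le> real n powr (3/4) / 2"
    using round_size_num_rounds_le[OF assms(1,2), of n] by simp
  moreover have "real n powr (3/4) \<le> real n powr 1"
    using assms by (intro powr_mono) auto
  ultimately show False using assms by simp
qed

lemma round_size_num_rounds_ge:
  assumes "0 \<le> p" "p \<le> 1/2" "1 \<le> n"
  shows "p * (real n powr (3/4) / 2) - 1 \<le> real (round_size n p (num_rounds n p))"
proof -
  obtain j where j: "num_rounds n p = Suc j"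
    using num_rounds_pos[OF assms] by (cases "num_rounds n p") auto
  then have "real n powr (3/4) / 2 < real (round_size n p j)"
    using round_size_gt_before_num_rounds[of j n p] by simp
  then have "p * (real n powr (3/4) / 2) \<le> p * real (round_size n p j)"
    using assms by (intro mult_left_mono) auto
  moreover have "p * real (round_size n p j) - 1 \<le> real (round_size n p (Suc j))"
    unfolding round_size_Suc by linarith
  ultimately show ?thesis using j by simp
qed

lemma round_size_single_round:
  assumes "1 \<le> n"
  shows "num_rounds n (real n powr (-1/4) / 2) = 1"
    and "round_size n (real n powr (-1/4) / 2) 1 = nat \<lfloor>real n powr (3/4) / 2\<rfloor>"
proof -
  define q where "q = real n powr (-1/4) / 2"
  have qn: "q * real n = real n powr (3/4) / 2"
    using powr_add[of "real n" "-1/4" 1] assms unfolding q_def by simp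
  have "round_size n q 1 = nat \<lfloor>q * real n\<rfloor>"
    using round_size_Suc[of n q 0] by simp
  then show size: "round_size n q 1 = nat \<lfloor>real n powr (3/4) / 2\<rfloor>"
    unfolding qn .
  have "real n powr (3/4) / 2 < real n"
    using powr_mono[of "3/4" 1 "real n"] assms by simp
  then have "1 \<le> i" if "real (round_size n q i) \<le> real n powr (3/4) / 2" for i
    using that by (cases i) auto
  moreover have "real (round_size n q 1) \<le> real n powr (3/4) / 2"
    unfolding size by (rule of_nat_floor) simp
  ultimately show "num_rounds n q = 1"
    unfolding num_rounds_def by (intro Least_equality)
qed

lemma surv_subset: "surv n \<alpha> \<delta>' \<phi> \<epsilon> X i \<subseteq> {..<n}"
  by (induction i) (auto dest: subsetD[OF top_k_subset])

lemma card_surv: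
  assumes "0 \<le> \<delta>' + \<phi>" "\<delta>' + \<phi> \<le> 1"
  shows "card (surv n \<alpha> \<delta>' \<phi> \<epsilon> X i) = round_size n (\<delta>' + \<phi>) i"
proof (induction i)
  case (Suc i)
  then show ?case
    using round_size_Suc_le[OF assms, of n i] by (simp add: card_top_k min_def)
qed simp

section \<open>Counting independent rare events\<close>

lemma (in prob_space) prob_Inter_ge_le_power:
  fixes Z :: "'i \<Rightarrow> 'a \<Rightarrow> real"
  assumes indep: "indep_vars (\<lambda>_. borel) Z A" and J: "J \<subseteq> A" "finite J" "J \<noteq> {}"
    and q: "\<And>a. a \<in> J \<Longrightarrow> prob {x \<in> space M. \<theta> \<le> Z a x} \<le> q"
  shows "prob (\<Inter>a\<in>J. {x \<in> space M. \<theta> \<le> Z a x}) \<le> q ^ card J"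
proof -
  have "prob (\<Inter>a\<in>J. {x \<in> space M. \<theta> \<le> Z a x}) = prob (\<Inter>a\<in>J. Z a -` {\<theta>..} \<inter> space M)"
    by (rule arg_cong[where f = prob]) auto
  also have "\<dots> = (\<Prod>a\<in>J. prob (Z a -` {\<theta>..} \<inter> space M))"
    using J by (intro indep_varsD[OF indep]) auto
  also have "\<dots> = (\<Prod>a\<in>J. prob {x \<in> space M. \<theta> \<le> Z a x})"
    by (intro prod.cong arg_cong[where f = prob]) auto
  also have "\<dots> \<le> (\<Prod>a\<in>J. q)"
    using q by (intro prod_mono) auto
  finally show ?thesis by simp
qed

lemma (in prob_space) prob_count_ge_le_binomial:
  fixes Z :: "'i \<Rightarrow> 'a \<Rightarrow> real"
  assumes indep: "indep_vars (\<lambda>_. borel) Z A" and A: "finite A" and k: "0 < k"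
    and q: "\<And>a. a \<in> A \<Longrightarrow> prob {x \<in> space M. \<theta> \<le> Z a x} \<le> q"
  shows "prob {x \<in> space M. k \<le> card {a \<in> A. \<theta> \<le> Z a x}} \<le> real (card A choose k) * q ^ k"
proof -
  define E where "E a = {x \<in> space M. \<theta> \<le> Z a x}" for a
  define F where "F = {J. J \<subseteq> A \<and> card J = k}"
  have E: "E a \<in> events" if "a \<in> A" for a
    using indep that unfolding indep_vars_def E_def by (auto intro: borel_measurable_le)
  have F: "J \<subseteq> A" "finite J" "J \<noteq> {}" "card J = k" if "J \<in> F" for J
    using that k A unfolding F_def by (auto intro: finite_subset)
  have "finite F" unfolding F_def using A by (auto intro: finite_subset[of _ "Pow A"])
  have inter: "(\<Inter>a\<in>J. E a) \<in> events" if "J \<in> F" for J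
    using F[OF that] E by (intro sets.finite_INT) auto
  have "{x \<in> space M. k \<le> card {a \<in> A. \<theta> \<le> Z a x}} \<subseteq> (\<Union>J\<in>F. \<Inter>a\<in>J. E a)"
  proof
    fix x assume x: "x \<in> {x \<in> space M. k \<le> card {a \<in> A. \<theta> \<le> Z a x}}"
    then obtain J where J: "J \<subseteq> {a \<in> A. \<theta> \<le> Z a x}" "card J = k"
      using obtain_subset_with_card_n by blast
    then have "J \<in> F" unfolding F_def by auto
    with J x show "x \<in> (\<Union>J\<in>F. \<Inter>a\<in>J. E a)" using F unfolding E_def by blast
  qed
  then have "prob {x \<in> space M. k \<le> card {a \<in> A. \<theta> \<le> Z a x}} \<le> prob (\<Union>J\<in>F. \<Inter>a\<in>J. E a)"
    using inter \<open>finite F\<close> by (intro finite_measure_mono) auto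
  also have "\<dots> \<le> (\<Sum>J\<in>F. prob (\<Inter>a\<in>J. E a))"
    using inter by (intro finite_measure_subadditive_finite[OF \<open>finite F\<close>]) auto
  also have "\<dots> \<le> (\<Sum>J\<in>F. q ^ k)"
  proof (rule sum_mono)
    fix J assume J: "J \<in> F"
    have "prob (\<Inter>a\<in>J. E a) \<le> q ^ card J"
      unfolding E_def using F(1)[OF J] q by (intro prob_Inter_ge_le_power[OF indep F(1-3)[OF J]]) auto
    then show "prob (\<Inter>a\<in>J. E a) \<le> q ^ k" using F(4)[OF J] by simp
  qed
  also have "\<dots> = real (card A choose k) * q ^ k"
    unfolding F_def using n_subsets[OF A, of k] by simp
  finally show ?thesis .
qed

lemma (in prob_space) prob_count_ge_hoeffding:
  fixes Z :: "'i \<Rightarrow> 'a \<Rightarrow> real"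
  assumes indep: "indep_vars (\<lambda>_. borel) Z A" and A: "finite A" "A \<noteq> {}"
    and q: "\<And>a. a \<in> A \<Longrightarrow> prob {x \<in> space M. \<theta> \<le> Z a x} \<le> q" and s: "0 \<le> s"
  shows "prob {x \<in> space M. real (card A) * q + s \<le> real (card {a \<in> A. \<theta> \<le> Z a x})}
           \<le> exp (- 2 * s\<^sup>2 / real (card A))"
proof -
  define Y where "Y a x = (if \<theta> \<le> Z a x then 1 else 0 :: real)" for a x
  have Z: "Z a \<in> borel_measurable M" if "a \<in> A" for a
    using indep that unfolding indep_vars_def by blast
  have indepY: "indep_vars (\<lambda>_. borel) Y A"
    unfolding Y_def by (rule indep_vars_compose2[OF indep]) measurable
  interpret H: Hoeffding_ineq M A Y "\<lambda>_. 0" "\<lambda>_. 1" "\<Sum>a\<in>A. expectation (Y a)"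
    by unfold_locales (use A indepY in \<open>auto simp: Y_def\<close>)
  have "expectation (Y a) = prob {x \<in> space M. \<theta> \<le> Z a x}" if "a \<in> A" for a
  proof -
    have "expectation (Y a) = expectation (indicator {x \<in> space M. \<theta> \<le> Z a x})"
      by (rule Bochner_Integration.integral_cong) (auto simp: Y_def indicator_def)
    then show ?thesis using Z[OF that] by simp
  qed
  then have mean: "(\<Sum>a\<in>A. expectation (Y a)) \<le> real (card A) * q"
    using sum_mono[of A "\<lambda>a. expectation (Y a)" "\<lambda>_. q"] q by simp
  have count: "(\<Sum>a\<in>A. Y a x) = real (card {a \<in> A. \<theta> \<le> Z a x})" for x
    unfolding Y_def by (simp add: sum.inter_filter[OF A(1), symmetric])
  have "prob {x \<in> space M. real (card A) * q + s \<le> real (card {a \<in> A. \<theta> \<le> Z a x})}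
      \<le> prob {x \<in> space M. (\<Sum>a\<in>A. expectation (Y a)) + s \<le> (\<Sum>a\<in>A. Y a x)}"
  proof (rule finite_measure_mono)
    have "Y a \<in> borel_measurable M" if "a \<in> A" for a
      using indepY that unfolding indep_vars_def by blast
    then show "{x \<in> space M. (\<Sum>a\<in>A. expectation (Y a)) + s \<le> (\<Sum>a\<in>A. Y a x)} \<in> events"
      by (intro borel_measurable_le borel_measurable_sum) auto
  qed (use mean in \<open>auto simp: count\<close>)
  also have "\<dots> \<le> exp (- 2 * s\<^sup>2 / (\<Sum>a\<in>A. (1 - 0)\<^sup>2))"
    using H.Hoeffding_ineq_ge[OF s] A by (simp add: card_gt_0_iff)
  finally show ?thesis by simp
qed

section \<open>The table of samples\<close>

lemma bandit_instanceD:
  assumes "bandit_instance n D" "a < n"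
  shows "prob_space (D a)" "sets (D a) = sets borel" "AE x in D a. 0 \<le> x \<and> x \<le> 1"
  using assms unfolding bandit_instance_def by blast+

definition sample_table :: "nat \<Rightarrow> (nat \<Rightarrow> real measure) \<Rightarrow> (nat \<times> nat \<Rightarrow> real) measure" where
  "sample_table n D = PiM ({..<n} \<times> UNIV) (\<lambda>(a, k). D a)"

text \<open>The point mass outside the arms makes every sample_distr n D i a Borel probability
  space, also at indices that are not coordinates of the table.\<close>

definition sample_distr :: "nat \<Rightarrow> (nat \<Rightarrow> real measure) \<Rightarrow> nat \<times> nat \<Rightarrow> real measure" where
  "sample_distr n D = (\<lambda>(a, k). if a < n then D a else return borel 0)"

lemma sample_distr_arm [simp]: "a < n \<Longrightarrow> sample_distr n D (a, k) = D a"
  by (simp add: sample_distr_def)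

lemma sample_table_eq_PiM_sample_distr:
  "sample_table n D = PiM ({..<n} \<times> UNIV) (sample_distr n D)"
  unfolding sample_table_def sample_distr_def by (rule PiM_cong) auto

lemma sum_sample_block:
  fixes X :: "'a \<times> nat \<Rightarrow> 'b::comm_monoid_add"
  shows "(\<Sum>i\<in>{a} \<times> {off..<off + m}. X i) = (\<Sum>k<m. X (a, off + k))"
proof -
  have "{a} \<times> {off..<off + m} = Pair a ` {off..<off + m}" by auto
  then have "(\<Sum>i\<in>{a} \<times> {off..<off + m}. X i) = (\<Sum>j\<in>{off..<off + m}. X (a, j))"
    by (simp add: sum.reindex inj_on_def)
  also have "\<dots> = (\<Sum>k<m. X (a, off + k))"
    by (induction m) auto
  finally show ?thesis .
qed

context
  fixes n D assumes D: "bandit_instance n D"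
begin

lemma sets_sample_distr: "sets (sample_distr n D i) = sets borel"
  unfolding sample_distr_def by (cases i) (auto simp: bandit_instanceD[OF D])

lemma space_sample_distr: "space (sample_distr n D i) = UNIV"
  using sets_eq_imp_space_eq[OF sets_sample_distr] by simp

lemma prob_space_sample_distr: "prob_space (sample_distr n D i)"
  unfolding sample_distr_def by (cases i) (auto simp: bandit_instanceD[OF D] prob_space_return)

lemma prob_space_sample_table: "prob_space (sample_table n D)"
  unfolding sample_table_eq_PiM_sample_distr by (rule prob_space_PiM) (rule prob_space_sample_distr)

lemma space_sample_table: "space (sample_table n D) = (\<Pi>\<^sub>E i\<in>{..<n} \<times> UNIV. UNIV)"
  unfolding sample_table_eq_PiM_sample_distr space_PiM by (simp add: space_sample_distr)

lemma measurable_sample: "(\<lambda>X. X i) \<in> measurable (sample_table n D) (sample_distr n D i)"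
proof (cases "i \<in> {..<n} \<times> UNIV")
  case True
  then show ?thesis
    unfolding sample_table_eq_PiM_sample_distr by (rule measurable_component_singleton)
next
  case False
  then have "X i = undefined" if "X \<in> space (sample_table n D)" for X
    using that by (cases i) (auto simp: space_sample_table PiE_def extensional_def)
  then show ?thesis
    by (subst measurable_cong[where g = "\<lambda>_. undefined"]) (auto simp: space_sample_distr)
qed

lemma borel_measurable_sample [measurable]: "(\<lambda>X. X i) \<in> borel_measurable (sample_table n D)"
  using measurable_sample measurable_cong_sets[OF refl sets_sample_distr] by blast

lemma borel_measurable_emp_mean [measurable]:
  "(\<lambda>X. emp_mean X off m a) \<in> borel_measurable (sample_table n D)"
  unfolding emp_mean_def by measurable

lemma measurable_id_sample_distr: "(\<lambda>x. x) \<in> borel_measurable (sample_distr n D i)"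
  using measurable_cong_sets[OF sets_sample_distr refl] measurable_ident_sets by blast

lemma distr_sample:
  "i \<in> {..<n} \<times> UNIV \<Longrightarrow> distr (sample_table n D) (sample_distr n D i) (\<lambda>X. X i) = sample_distr n D i"
  unfolding sample_table_eq_PiM_sample_distr
  by (rule distr_PiM_component) (auto intro: prob_space_sample_distr)

lemma expectation_sample:
  assumes "a < n"
  shows "prob_space.expectation (sample_table n D) (\<lambda>X. X (a, k)) = arm_mean D a"
proof -
  have "integral\<^sup>L (sample_table n D) (\<lambda>X. X (a, k))
      = integral\<^sup>L (distr (sample_table n D) (sample_distr n D (a, k)) (\<lambda>X. X (a, k))) (\<lambda>x. x)"
    by (rule integral_distr[symmetric, OF measurable_sample measurable_id_sample_distr])
  then show ?thesis using distr_sample[of "(a, k)"] assms by (simp add: arm_mean_def)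
qed

lemma AE_sample_unit_interval:
  assumes "a < n"
  shows "AE X in sample_table n D. X (a, k) \<in> {0..1}"
proof -
  have "AE x in sample_distr n D (a, k). x \<in> {0..1}"
    unfolding sample_distr_arm[OF assms] using bandit_instanceD(3)[OF D assms] by simp
  then show ?thesis
    unfolding sample_table_eq_PiM_sample_distr using assms
    by (intro AE_PiM_component) (auto intro: prob_space_sample_distr)
qed

lemma indep_vars_samples:
  assumes "0 < n"
  shows "prob_space.indep_vars (sample_table n D) (sample_distr n D) (\<lambda>i X. X i) ({..<n} \<times> UNIV)"
proof -
  interpret P: prob_space "sample_table n D" by (rule prob_space_sample_table)
  have "distr (sample_table n D) (\<Pi>\<^sub>M i\<in>{..<n} \<times> UNIV. sample_distr n D i) (\<lambda>X. \<lambda>i\<in>{..<n} \<times> UNIV. X i)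
      = sample_table n D"
    unfolding sample_table_eq_PiM_sample_distr
    by (subst distr_cong[where g = "\<lambda>X. X"])
       (auto simp: space_PiM PiE_def restrict_def extensional_def fun_eq_iff)
  moreover have "(\<Pi>\<^sub>M i\<in>{..<n} \<times> UNIV. distr (sample_table n D) (sample_distr n D i) (\<lambda>X. X i))
      = sample_table n D"
    unfolding sample_table_eq_PiM_sample_distr by (rule PiM_cong) (auto intro!: distr_PiM_component prob_space_sample_distr)
  ultimately show ?thesis
    using assms by (subst P.indep_vars_iff_distr_eq_PiM) (auto intro: measurable_sample)
qed

lemma indep_vars_samples_borel:
  assumes "0 < n" "J \<subseteq> {..<n} \<times> UNIV"
  shows "prob_space.indep_vars (sample_table n D) (\<lambda>_. borel) (\<lambda>i X. X i) J"
proof -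
  interpret P: prob_space "sample_table n D" by (rule prob_space_sample_table)
  have "P.indep_vars (\<lambda>_. borel) (\<lambda>i X. (\<lambda>x. x) (X i)) J"
    by (rule P.indep_vars_compose2[OF P.indep_vars_subset[OF indep_vars_samples[OF assms(1)] assms(2)]])
       (rule measurable_id_sample_distr)
  then show ?thesis by simp
qed

lemma indep_vars_emp_mean:
  assumes "0 < n"
  shows "prob_space.indep_vars (sample_table n D) (\<lambda>_. borel) (\<lambda>a X. emp_mean X off m a) {..<n}"
proof -
  interpret P: prob_space "sample_table n D" by (rule prob_space_sample_table)
  define K where "K a = {a} \<times> {off..<off + m}" for a :: nat
  have "P.indep_vars (\<lambda>a. PiM (K a) (\<lambda>_. borel)) (\<lambda>a X. restrict (\<lambda>i. X i) (K a)) {..<n}"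
    by (rule P.indep_vars_restrict[OF indep_vars_samples_borel[OF assms order_refl]])
       (auto simp: K_def disjoint_family_on_def)
  then have "P.indep_vars (\<lambda>_. borel)
      (\<lambda>a X. (\<lambda>Y. (\<Sum>k<m. Y (a, off + k)) / real m) (restrict (\<lambda>i. X i) (K a))) {..<n}"
  proof (rule P.indep_vars_compose2)
    fix a
    have "(\<lambda>Y. Y (a, off + k)) \<in> borel_measurable (PiM (K a) (\<lambda>_. borel))" if "k < m" for k
      using that by (intro measurable_component_singleton) (auto simp: K_def)
    then show "(\<lambda>Y. (\<Sum>k<m. Y (a, off + k)) / real m) \<in> borel_measurable (PiM (K a) (\<lambda>_. borel))"
      by (intro borel_measurable_divide borel_measurable_sum) auto
  qed
  moreover have "(\<lambda>Y. (\<Sum>k<m. Y (a, off + k)) / real m) (restrict (\<lambda>i. X i) (K a)) = emp_mean X off m a" for a X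
    by (auto simp: emp_mean_def K_def intro!: sum.cong arg_cong2[where f = "(/)"])
  ultimately show ?thesis by simp
qed

lemma hoeffding_emp_mean:
  assumes a: "a < n" and m: "0 < m" and t: "0 \<le> t"
  shows "measure (sample_table n D) {X \<in> space (sample_table n D). emp_mean X off m a \<le> arm_mean D a - t}
           \<le> exp (- 2 * real m * t\<^sup>2)"
    and "measure (sample_table n D) {X \<in> space (sample_table n D). arm_mean D a + t \<le> emp_mean X off m a}
           \<le> exp (- 2 * real m * t\<^sup>2)"
    and "measure (sample_table n D) {X \<in> space (sample_table n D). t \<le> \<bar>emp_mean X off m a - arm_mean D a\<bar>}
           \<le> 2 * exp (- 2 * real m * t\<^sup>2)"
proof -
  interpret P: prob_space "sample_table n D" by (rule prob_space_sample_table)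
  define J where "J = {a} \<times> {off..<off + m}"
  interpret H: Hoeffding_ineq "sample_table n D" J "\<lambda>i X. X i" "\<lambda>_. 0" "\<lambda>_. 1" "real m * arm_mean D a"
  proof unfold_locales
    show "finite J" unfolding J_def by simp
    show "P.indep_vars (\<lambda>_. borel) (\<lambda>i X. X i) J"
      using a by (intro indep_vars_samples_borel) (auto simp: J_def)
    show "AE X in sample_table n D. X i \<in> {0..1}" if "i \<in> J" for i
      using that a AE_sample_unit_interval by (auto simp: J_def)
    show "real m * arm_mean D a \<equiv> (\<Sum>i\<in>J. P.expectation (\<lambda>X. X i))"
      unfolding J_def sum_sample_block using expectation_sample[OF a] by simp
  qed
  have sum_J: "(\<Sum>i\<in>J. X i) = real m * emp_mean X off m a" for X
    unfolding J_def sum_sample_block emp_mean_def using m by simp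
  have width: "(\<Sum>i\<in>J. ((\<lambda>_. 1::real) i - (\<lambda>_. 0) i)\<^sup>2) = real m"
    unfolding J_def by simp
  have exponent: "exp (- 2 * (real m * t)\<^sup>2 / real m) = exp (- 2 * real m * t\<^sup>2)"
    using m by (simp add: power2_eq_square)
  have mt: "0 \<le> real m * t" and pos: "0 < (\<Sum>i\<in>J. ((\<lambda>_. 1::real) i - (\<lambda>_. 0) i)\<^sup>2)"
    using t m width by auto
  have "{X \<in> space (sample_table n D). emp_mean X off m a \<le> arm_mean D a - t}
      = {X \<in> space (sample_table n D). (\<Sum>i\<in>J. X i) \<le> real m * arm_mean D a - real m * t}"
    using m by (auto simp: sum_J right_diff_distrib[symmetric])
  then show "measure (sample_table n D) {X \<in> space (sample_table n D). emp_mean X off m a \<le> arm_mean D a - t}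
           \<le> exp (- 2 * real m * t\<^sup>2)"
    using H.Hoeffding_ineq_le[OF mt pos] by (simp only: width exponent)
  have "{X \<in> space (sample_table n D). arm_mean D a + t \<le> emp_mean X off m a}
      = {X \<in> space (sample_table n D). real m * arm_mean D a + real m * t \<le> (\<Sum>i\<in>J. X i)}"
    using m by (auto simp: sum_J distrib_left[symmetric])
  then show "measure (sample_table n D) {X \<in> space (sample_table n D). arm_mean D a + t \<le> emp_mean X off m a}
           \<le> exp (- 2 * real m * t\<^sup>2)"
    using H.Hoeffding_ineq_ge[OF mt pos] by (simp only: width exponent)
  have "{X \<in> space (sample_table n D). t \<le> \<bar>emp_mean X off m a - arm_mean D a\<bar>}
      = {X \<in> space (sample_table n D). real m * t \<le> \<bar>(\<Sum>i\<in>J. X i) - real m * arm_mean D a\<bar>}"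
    using m by (auto simp: sum_J right_diff_distrib[symmetric] abs_mult)
  then show "measure (sample_table n D) {X \<in> space (sample_table n D). t \<le> \<bar>emp_mean X off m a - arm_mean D a\<bar>}
           \<le> 2 * exp (- 2 * real m * t\<^sup>2)"
    using H.Hoeffding_ineq_abs_ge[OF mt pos] by (simp only: width exponent)
qed

end

section \<open>The random set of arms\<close>

lemma binomial_diff_le_exp:
  assumes "g \<le> n"
  shows "real ((n - g) choose r) \<le> real (n choose r) * exp (- real r * real g / real n)"
  using assms
proof (induction g)
  case (Suc g)
  define M where "M = n - g"
  have M: "1 \<le> M" "M \<le> n" using Suc.prems unfolding M_def by auto
  have "real ((M - 1) choose r) \<le> real (M choose r) * exp (- real r / real n)"
  proof (cases "r \<le> M")
    case True
    have "real (M - r) * real (M choose r) = real M * real ((M - 1) choose r)"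
      using binomial_absorb_comp[of M r] by (metis of_nat_mult)
    then have "real ((M - 1) choose r) = real (M choose r) * (1 - real r / real M)"
      using True M by (simp add: field_simps of_nat_diff)
    also have "\<dots> \<le> real (M choose r) * (1 - real r / real n)"
      using M by (intro mult_left_mono) (simp_all add: frac_le)
    also have "\<dots> \<le> real (M choose r) * exp (- real r / real n)"
      using exp_ge_add_one_self[of "- real r / real n"] by (intro mult_left_mono) simp_all
    finally show ?thesis .
  next
    case False
    then have "(M - 1) choose r = 0" using M by simp
    then show ?thesis by (metis exp_ge_zero mult_nonneg_nonneg of_nat_0 of_nat_0_le_iff)
  qed
  also have "\<dots> \<le> real (n choose r) * exp (- real r * real g / real n) * exp (- real r / real n)"
    using Suc M_def by (simp add: mult_right_mono)
  also have "\<dots> = real (n choose r) * exp (- real r * real (Suc g) / real n)"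
    by (simp add: mult.assoc exp_add[symmetric] add_divide_distrib[symmetric] algebra_simps)
  finally show ?case using M_def by (simp add: diff_Suc)
qed simp

lemma finite_rand_sets: "finite (rand_sets n)"
  unfolding rand_sets_def by (rule finite_subset[of _ "Pow {..<n}"]) auto

lemma rand_set_size_le_powr: "real (rand_set_size n) \<le> real n powr (7/8) / 2"
proof -
  have "0 \<le> \<lfloor>real n powr (7/8) / 2\<rfloor>" by simp
  then show ?thesis unfolding rand_set_size_def by linarith
qed

lemma rand_set_size_le: "rand_set_size n \<le> n"
proof -
  have "real n powr (7/8) \<le> real n powr 1" if "n \<noteq> 0"
    using that by (intro powr_mono) auto
  then have "real n powr (7/8) \<le> real n" by (cases "n = 0") auto
  then show ?thesis using rand_set_size_le_powr[of n] by linarith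
qed

lemma card_rand_sets: "card (rand_sets n) = n choose rand_set_size n"
  unfolding rand_sets_def using n_subsets[of "{..<n}" "rand_set_size n"] by simp

lemma rand_sets_nonempty: "rand_sets n \<noteq> {}"
  using card_rand_sets[of n] rand_set_size_le[of n] by auto

lemma prob_rand_set_disjoint:
  assumes G: "G \<subseteq> {..<n}"
  shows "measure (pmf_of_set (rand_sets n)) {R. R \<inter> G = {}}
      \<le> exp (- real (rand_set_size n) * real (card G) / real n)"
proof -
  define r where "r = rand_set_size n"
  have "finite G" using G finite_subset by blast
  have "rand_sets n \<inter> {R. R \<inter> G = {}} = {R. R \<subseteq> {..<n} - G \<and> card R = r}"
    unfolding rand_sets_def r_def by auto
  then have "card (rand_sets n \<inter> {R. R \<inter> G = {}}) = (n - card G) choose r"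
    using n_subsets[of "{..<n} - G" r] G \<open>finite G\<close> by (simp add: card_Diff_subset)
  then have "measure (pmf_of_set (rand_sets n)) {R. R \<inter> G = {}} = real ((n - card G) choose r) / real (n choose r)"
    using measure_pmf_of_set[OF rand_sets_nonempty finite_rand_sets] card_rand_sets r_def by simp
  also have "\<dots> \<le> exp (- real r * real (card G) / real n)"
    using binomial_diff_le_exp[OF card_mono[OF _ G], of r] rand_set_size_le[of n] r_def
    by (simp add: field_simps)
  finally show ?thesis unfolding r_def .
qed

section \<open>Measurability of the algorithm\<close>

lemma measurable_insort_key:
  fixes h :: "'x \<Rightarrow> 'a::countable \<Rightarrow> real"
  assumes "\<And>a. (\<lambda>x. h x a) \<in> borel_measurable M"
  shows "(\<lambda>x. insort_key (h x) y ys) \<in> measurable M (count_space UNIV)"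
proof (induction ys)
  case (Cons z zs)
  have "{x \<in> space M. h x y \<le> h x z} \<in> sets M" using assms by measurable
  moreover have "(\<lambda>x. z # insort_key (h x) y zs) \<in> measurable M (count_space UNIV)"
    using measurable_compose[OF Cons, of "\<lambda>l. z # l"] by simp
  ultimately show ?case by (simp only: insort_key.simps) (rule measurable_If; simp)
qed simp

lemma measurable_sort_key:
  fixes h :: "'x \<Rightarrow> 'a::countable \<Rightarrow> real"
  assumes "\<And>a. (\<lambda>x. h x a) \<in> borel_measurable M"
  shows "(\<lambda>x. sort_key (h x) xs) \<in> measurable M (count_space UNIV)"
proof (induction xs)
  case (Cons y ys)
  have "(\<lambda>x. (\<lambda>l x. insort_key (h x) y l) (sort_key (h x) ys) x) \<in> measurable M (count_space UNIV)"
    by (rule measurable_compose_countable[OF measurable_insort_key[OF assms] Cons])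
  then show ?case by simp
qed simp

lemma measurable_top_k:
  fixes f :: "'x \<Rightarrow> nat \<Rightarrow> real"
  assumes "\<And>a. (\<lambda>x. f x a) \<in> borel_measurable M"
  shows "(\<lambda>x. top_k k (f x) S) \<in> measurable M (count_space UNIV)"
proof -
  have "(\<lambda>x. sort_key (\<lambda>a. - f x a) (sorted_list_of_set S)) \<in> measurable M (count_space UNIV)"
    by (rule measurable_sort_key) (use assms in measurable)
  from measurable_compose[OF this, of "\<lambda>l. set (take k l)"] show ?thesis
    unfolding top_k_def by simp
qed

lemma measurable_compose_subset_valued:
  fixes g :: "'x \<Rightarrow> nat set"
  assumes g: "g \<in> measurable M (count_space UNIV)" "\<And>x. x \<in> space M \<Longrightarrow> g x \<subseteq> {..<n}"
    and F: "\<And>S. S \<subseteq> {..<n} \<Longrightarrow> (\<lambda>x. F S x) \<in> measurable M N"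
  shows "(\<lambda>x. F (g x) x) \<in> measurable M N"
proof (rule measurable_compose_countable'[where I = "Pow {..<n}"])
  show "g \<in> measurable M (count_space (Pow {..<n}))"
    using g measurable_sets[OF g(1)]
    by (auto simp: measurable_count_space_eq2[OF finite_Pow_iff[THEN iffD2]])
qed (use F in \<open>auto simp: countable_finite\<close>)

context
  fixes n D assumes D: "bandit_instance n D"
begin

lemma measurable_surv:
  "(\<lambda>X. surv n \<alpha> \<delta>' \<phi> \<epsilon> X i) \<in> measurable (sample_table n D) (count_space UNIV)"
proof (induction i)
  case (Suc i)
  have "(\<lambda>X. (\<lambda>S X. top_k (round_size n (\<delta>' + \<phi>) (Suc i))
       (emp_mean X (round_offset \<alpha> \<delta>' \<epsilon> i) (round_samples \<alpha> \<delta>' \<epsilon> i)) S) (surv n \<alpha> \<delta>' \<phi> \<epsilon> X i) X)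
     \<in> measurable (sample_table n D) (count_space UNIV)"
    by (rule measurable_compose_subset_valued[OF Suc surv_subset])
       (rule measurable_top_k, rule borel_measurable_emp_mean[OF D])
  then show ?case by simp
qed simp

lemma measurable_aba_output_fixed_set:
  "(\<lambda>X. aba_output n \<alpha> \<delta>' \<delta>'' \<phi> \<epsilon> R X) \<in> measurable (sample_table n D) (count_space UNIV)"
proof -
  define off where "off = round_offset \<alpha> \<delta>' \<epsilon> (num_rounds n (\<delta>' + \<phi>))"
  define F where "F S X = hd (sort_key (\<lambda>a. - emp_mean X off (final_samples \<alpha> \<delta>'' \<epsilon> (card (S \<union> R))) a)
      (sorted_list_of_set (S \<union> R)))" for S X
  have "(\<lambda>X. F (surv n \<alpha> \<delta>' \<phi> \<epsilon> X (num_rounds n (\<delta>' + \<phi>))) X) \<in> measurable (sample_table n D) (count_space UNIV)"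
  proof (rule measurable_compose_subset_valued[OF measurable_surv surv_subset])
    fix S :: "nat set"
    have "(\<lambda>X. sort_key (\<lambda>a. - emp_mean X off (final_samples \<alpha> \<delta>'' \<epsilon> (card (S \<union> R))) a)
      (sorted_list_of_set (S \<union> R))) \<in> measurable (sample_table n D) (count_space UNIV)"
      by (rule measurable_sort_key) (use borel_measurable_emp_mean[OF D] in measurable)
    from measurable_compose[OF this, of hd] show "F S \<in> measurable (sample_table n D) (count_space UNIV)"
      unfolding F_def by simp
  qed
  then show ?thesis unfolding aba_output_def final_set_def F_def off_def Let_def by simp
qed

text \<open>R enters only through the finite sets; all infinite R give the same output, which
  reduces measurability in R to the countable set of finite sets.\<close>

lemma measurable_aba_output:
  "(\<lambda>\<omega>. aba_output n \<alpha> \<delta>' \<delta>'' \<phi> \<epsilon> (fst \<omega>) (snd \<omega>)) \<in> measurable (aba_space n D) (count_space UNIV)"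
proof -
  define h :: "nat set \<Rightarrow> nat set" where "h R = (if finite R then R else UNIV)" for R
  have "infinite (final_set n \<alpha> \<delta>' \<phi> \<epsilon> R X)" if "infinite R" for R X
    using that unfolding final_set_def by (auto dest: finite_subset[rotated])
  then have h: "aba_output n \<alpha> \<delta>' \<delta>'' \<phi> \<epsilon> (h R) X = aba_output n \<alpha> \<delta>' \<delta>'' \<phi> \<epsilon> R X" for R X
    unfolding h_def aba_output_def Let_def by auto
  have aba_space: "aba_space n D = measure_pmf (pmf_of_set (rand_sets n)) \<Otimes>\<^sub>M sample_table n D"
    unfolding aba_space_def sample_table_def ..
  have "(\<lambda>\<omega>. (\<lambda>R \<omega>. aba_output n \<alpha> \<delta>' \<delta>'' \<phi> \<epsilon> R (snd \<omega>)) (h (fst \<omega>)) \<omega>)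
      \<in> measurable (aba_space n D) (count_space UNIV)"
  proof (rule measurable_compose_countable'[where I = "insert UNIV (Collect finite)"])
    show "(\<lambda>\<omega>. h (fst \<omega>)) \<in> measurable (aba_space n D) (count_space (insert UNIV (Collect finite)))"
      unfolding aba_space by (rule measurable_compose[OF measurable_fst]) (auto simp: h_def)
  qed (auto simp: aba_space countable_Collect_finite
        intro: measurable_compose[OF measurable_snd measurable_aba_output_fixed_set])
  then show ?thesis using h by simp
qed

end

section \<open>Reduction to exceptional events\<close>

lemma (in finite_measure) measure_Un3_le:
  assumes "A \<in> sets M" "B \<in> sets M" "C \<in> sets M"
  shows "measure M (A \<union> B \<union> C) \<le> measure M A + measure M B + measure M C"
  using assms measure_Un_le[of "A \<union> B" M C] measure_Un_le[of A M B] by auto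

lemma (in pair_prob_space) prob_ge_if_outside_exceptional:
  assumes S: "S \<in> sets (M1 \<Otimes>\<^sub>M M2)" and BR: "BR \<in> sets M1" and BX: "BX \<in> sets M2"
    and outside: "\<And>x y. x \<in> space M1 - BR \<Longrightarrow> y \<in> space M2 - BX \<Longrightarrow> (x, y) \<in> S"
  shows "1 - (M1.prob BR + M2.prob BX) \<le> prob S"
proof -
  have "space (M1 \<Otimes>\<^sub>M M2) - S \<subseteq> BR \<times> space M2 \<union> space M1 \<times> BX"
    using outside by (auto simp: space_pair_measure)
  then have "prob (space (M1 \<Otimes>\<^sub>M M2) - S) \<le> prob (BR \<times> space M2 \<union> space M1 \<times> BX)"
    using BR BX by (intro finite_measure_mono) auto
  also have "\<dots> \<le> prob (BR \<times> space M2) + prob (space M1 \<times> BX)"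
    using BR BX by (intro measure_Un_le) auto
  also have "\<dots> = M1.prob BR + M2.prob BX"
    using BR BX M1.emeasure_space_1 M2.emeasure_space_1
      M2.emeasure_pair_measure_Times[of BR M1 "space M2"] M2.emeasure_pair_measure_Times[of "space M1" M1 BX]
    by (simp add: measure_def enn2real_mult)
  finally show ?thesis using S by (simp add: prob_compl)
qed

lemma aba_learnsI:
  assumes D: "bandit_instance n D" and BX: "BX \<in> sets (sample_table n D)"
    and success: "\<And>R X. R \<in> rand_sets n \<Longrightarrow> R \<notin> BR \<Longrightarrow> X \<in> space (sample_table n D) \<Longrightarrow> X \<notin> BX \<Longrightarrow>
        best_mean n D - \<epsilon> \<le> arm_mean D (aba_output n \<alpha> \<delta>' \<delta>'' \<phi> \<epsilon> R X)"
    and bound: "measure (pmf_of_set (rand_sets n)) BR + measure (sample_table n D) BX \<le> \<delta>"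
  shows "aba_learns n \<alpha> \<delta>' \<delta>'' \<phi> \<epsilon> \<delta> D"
proof -
  define MR where "MR = measure_pmf (pmf_of_set (rand_sets n))"
  interpret PP: pair_prob_space MR "sample_table n D"
    unfolding pair_prob_space_def pair_sigma_finite_def MR_def
    using prob_space_sample_table[OF D] by (simp add: prob_space_imp_sigma_finite prob_space_measure_pmf)
  have aba_space: "aba_space n D = MR \<Otimes>\<^sub>M sample_table n D"
    unfolding aba_space_def sample_table_def MR_def ..
  have "measure MR (- rand_sets n) = 0"
    unfolding MR_def by (simp add: measure_pmf_zero_iff rand_sets_nonempty finite_rand_sets)
  then have "measure MR (BR \<union> - rand_sets n) \<le> measure MR BR"
    using measure_Un_le[of BR MR "- rand_sets n"] by (simp add: MR_def)
  moreover have "1 - (measure MR (BR \<union> - rand_sets n) + measure (sample_table n D) BX)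
      \<le> measure (aba_space n D)
           {\<omega> \<in> space (aba_space n D). best_mean n D - \<epsilon> \<le> arm_mean D (aba_output n \<alpha> \<delta>' \<delta>'' \<phi> \<epsilon> (fst \<omega>) (snd \<omega>))}"
    unfolding aba_space
  proof (rule PP.prob_ge_if_outside_exceptional[OF _ _ BX])
    show "{\<omega> \<in> space (MR \<Otimes>\<^sub>M sample_table n D).
        best_mean n D - \<epsilon> \<le> arm_mean D (aba_output n \<alpha> \<delta>' \<delta>'' \<phi> \<epsilon> (fst \<omega>) (snd \<omega>))} \<in> PP.events"
      using measurable_sets[OF measurable_aba_output[OF D], of "{a. best_mean n D - \<epsilon> \<le> arm_mean D a}"]
      unfolding aba_space by (simp add: vimage_def Int_def conj_commute)
  qed (use success in \<open>auto simp: MR_def space_pair_measure\<close>)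
  ultimately show ?thesis
    unfolding aba_learns_def using bound by (simp add: MR_def)
qed

section \<open>Analysis of one run\<close>

locale aba_analysis =
  fixes n :: nat and D :: "nat \<Rightarrow> real measure" and \<alpha> \<delta>' \<delta>'' \<phi> \<epsilon> :: real
  assumes bandit: "bandit_instance n D" and n: "0 < n"
    and \<alpha>: "0 < \<alpha>" "\<alpha> < 1" and \<delta>': "0 < \<delta>'" and \<delta>'': "0 < \<delta>''" "\<delta>'' < 1"
    and \<phi>: "0 \<le> \<phi>" and keep_le: "\<delta>' + \<phi> \<le> 1/2" and \<epsilon>: "0 < \<epsilon>"
begin

sublocale T: prob_space "sample_table n D"
  by (rule prob_space_sample_table[OF bandit])

definition "keep = \<delta>' + \<phi>"
definition "rounds = num_rounds n keep"
definition "kept i = round_size n keep i"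
definition "survivors X i = surv n \<alpha> \<delta>' \<phi> \<epsilon> X i"
definition "est i X a = emp_mean X (round_offset \<alpha> \<delta>' \<epsilon> i) (round_samples \<alpha> \<delta>' \<epsilon> i) a"
definition "\<mu> a = arm_mean D a"
definition "\<mu>_star = best_mean n D"
definition "\<theta> = \<mu>_star - \<alpha> * \<epsilon> / 2"
definition "good = {a. a < n \<and> \<mu>_star - \<alpha> * \<epsilon> \<le> \<mu> a}"
definition "bad = {a. a < n \<and> \<mu> a < \<mu>_star - \<alpha> * \<epsilon>}"
definition "lucky_bad i X = card {a \<in> bad. \<theta> \<le> est i X a}"
definition "final_offset = round_offset \<alpha> \<delta>' \<epsilon> rounds"
definition "final_tol = (1 - \<alpha>) * \<epsilon> / 2"
definition "final_failure = {X \<in> space (sample_table n D). \<exists>a<n. \<exists>s\<in>{1..n}.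
    final_tol \<le> \<bar>emp_mean X final_offset (final_samples \<alpha> \<delta>'' \<epsilon> s) a - \<mu> a\<bar>}"

lemma keep: "0 \<le> keep" "keep \<le> 1/2"
  using \<delta>' \<phi> keep_le unfolding keep_def by auto

lemma \<delta>'_lt_1: "\<delta>' < 1"
  using \<phi> keep_le by simp

lemma best_arm_exists: "\<exists>a<n. \<mu> a = \<mu>_star"
proof -
  have "finite (arm_mean D ` {..<n})" "arm_mean D ` {..<n} \<noteq> {}" using n by auto
  from Max_in[OF this] show ?thesis unfolding \<mu>_star_def best_mean_def \<mu>_def by auto
qed

lemma best_arm_good: "a < n \<Longrightarrow> \<mu> a = \<mu>_star \<Longrightarrow> a \<in> good"
  unfolding good_def using \<alpha> \<epsilon> by simp

lemma finite_bad: "finite bad" and card_bad_le: "card bad \<le> n"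
  using card_mono[of "{..<n}" bad] unfolding bad_def by auto

lemma rounds_le: "rounds \<le> n"
  unfolding rounds_def using num_rounds_le[OF keep] .

lemma kept_rounds_le: "real (kept rounds) \<le> real n powr (3/4) / 2"
  unfolding kept_def rounds_def by (rule round_size_num_rounds_le[OF keep])

lemma kept_antimono: "i \<le> j \<Longrightarrow> kept j \<le> kept i"
  unfolding kept_def using round_size_antimono keep by auto

lemma survivors_subset: "survivors X i \<subseteq> {..<n}"
  unfolding survivors_def by (rule surv_subset)

lemma finite_survivors: "finite (survivors X i)"
  using survivors_subset finite_subset by blast

lemma card_survivors: "card (survivors X i) = kept i"
  unfolding survivors_def kept_def keep_def using card_surv keep unfolding keep_def by auto

lemma survivors_Suc: "survivors X (Suc i) = top_k (kept (Suc i)) (est i X) (survivors X i)"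
  unfolding survivors_def kept_def est_def keep_def by simp

lemma final_set_eq: "final_set n \<alpha> \<delta>' \<phi> \<epsilon> R X = survivors X rounds \<union> R"
  unfolding final_set_def survivors_def rounds_def keep_def ..

lemma borel_measurable_est: "(\<lambda>X. est i X a) \<in> borel_measurable (sample_table n D)"
  unfolding est_def by (rule borel_measurable_emp_mean[OF bandit])

lemma borel_measurable_lucky_bad: "(\<lambda>X. real (lucky_bad i X)) \<in> borel_measurable (sample_table n D)"
proof -
  have "real (lucky_bad i X) = (\<Sum>a\<in>bad. if \<theta> \<le> est i X a then 1 else 0)" for X
    unfolding lucky_bad_def by (simp add: sum.inter_filter[OF finite_bad, symmetric])
  then show ?thesis using borel_measurable_est by simp
qed

lemma round_samples_ge:
  "real (Suc i) * (2 / (\<alpha> * \<epsilon>)\<^sup>2 * ln (1 / \<delta>')) \<le> real (round_samples \<alpha> \<delta>' \<epsilon> i)"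
proof -
  have "2 / (\<alpha> * \<epsilon>)\<^sup>2 * ln (1 / \<delta>') \<le> real (nat \<lceil>2 / (\<alpha> * \<epsilon>)\<^sup>2 * ln (1 / \<delta>')\<rceil>)" by linarith
  moreover have "real (round_samples \<alpha> \<delta>' \<epsilon> i) = real (Suc i) * real (nat \<lceil>2 / (\<alpha> * \<epsilon>)\<^sup>2 * ln (1 / \<delta>')\<rceil>)"
    unfolding round_samples_def by (simp add: algebra_simps)
  ultimately show ?thesis by (metis mult_left_mono of_nat_0_le_iff)
qed

lemma round_samples_pos: "0 < round_samples \<alpha> \<delta>' \<epsilon> i"
proof -
  have "0 < real (Suc i) * (2 / (\<alpha> * \<epsilon>)\<^sup>2 * ln (1 / \<delta>'))"
    using \<alpha> \<epsilon> \<delta>' \<delta>'_lt_1 by (simp del: of_nat_Suc)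
  then show ?thesis using round_samples_ge[of i] by linarith
qed

lemma exp_round_samples_le: "exp (- 2 * real (round_samples \<alpha> \<delta>' \<epsilon> i) * (\<alpha> * \<epsilon> / 2)\<^sup>2) \<le> \<delta>' ^ Suc i"
proof -
  have "real (Suc i) * ln (1 / \<delta>') = real (Suc i) * (2 / (\<alpha> * \<epsilon>)\<^sup>2 * ln (1 / \<delta>')) * ((\<alpha> * \<epsilon>)\<^sup>2 / 2)"
    using \<alpha> \<epsilon> by (simp add: field_simps)
  also have "\<dots> \<le> real (round_samples \<alpha> \<delta>' \<epsilon> i) * ((\<alpha> * \<epsilon>)\<^sup>2 / 2)"
    by (rule mult_right_mono[OF round_samples_ge]) simp
  also have "\<dots> = 2 * real (round_samples \<alpha> \<delta>' \<epsilon> i) * (\<alpha> * \<epsilon> / 2)\<^sup>2"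
    by (simp add: power2_eq_square field_simps)
  finally have "exp (- 2 * real (round_samples \<alpha> \<delta>' \<epsilon> i) * (\<alpha> * \<epsilon> / 2)\<^sup>2) \<le> exp (real (Suc i) * ln \<delta>')"
    using \<delta>' by (simp add: ln_div)
  also have "\<dots> = \<delta>' ^ Suc i"
    using \<delta>' by (simp only: exp_of_nat_mult exp_ln)
  finally show ?thesis .
qed

lemma prob_est_lt:
  assumes "a < n" "\<theta> \<le> \<mu> a - \<alpha> * \<epsilon> / 2"
  shows "T.prob {X \<in> space (sample_table n D). est i X a < \<theta>} \<le> \<delta>' ^ Suc i"
proof -
  have "T.prob {X \<in> space (sample_table n D). est i X a < \<theta>}
     \<le> T.prob {X \<in> space (sample_table n D). est i X a \<le> \<mu> a - \<alpha> * \<epsilon> / 2}"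
    using assms(2) borel_measurable_est by (intro T.finite_measure_mono) auto
  also have "\<dots> \<le> exp (- 2 * real (round_samples \<alpha> \<delta>' \<epsilon> i) * (\<alpha> * \<epsilon> / 2)\<^sup>2)"
    unfolding est_def \<mu>_def using \<alpha> \<epsilon>
    by (intro hoeffding_emp_mean(1)[OF bandit assms(1) round_samples_pos]) simp
  also have "\<dots> \<le> \<delta>' ^ Suc i" by (rule exp_round_samples_le)
  finally show ?thesis .
qed

lemma prob_bad_est_ge:
  assumes "a \<in> bad"
  shows "T.prob {X \<in> space (sample_table n D). \<theta> \<le> est i X a} \<le> \<delta>' ^ Suc i"
proof -
  have "T.prob {X \<in> space (sample_table n D). \<theta> \<le> est i X a}
     \<le> T.prob {X \<in> space (sample_table n D). \<mu> a + \<alpha> * \<epsilon> / 2 \<le> est i X a}"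
    using assms borel_measurable_est by (intro T.finite_measure_mono) (auto simp: bad_def \<theta>_def)
  also have "\<dots> \<le> exp (- 2 * real (round_samples \<alpha> \<delta>' \<epsilon> i) * (\<alpha> * \<epsilon> / 2)\<^sup>2)"
    unfolding est_def \<mu>_def using assms \<alpha> \<epsilon>
    by (intro hoeffding_emp_mean(2)[OF bandit _ round_samples_pos]) (simp_all add: bad_def)
  also have "\<dots> \<le> \<delta>' ^ Suc i" by (rule exp_round_samples_le)
  finally show ?thesis .
qed

lemma indep_vars_est_bad: "T.indep_vars (\<lambda>_. borel) (\<lambda>a X. est i X a) bad"
  unfolding est_def
  by (rule T.indep_vars_subset[OF indep_vars_emp_mean[OF bandit n]]) (auto simp: bad_def)

lemma prob_lucky_bad_ge_binomial:
  assumes "0 < k"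
  shows "T.prob {X \<in> space (sample_table n D). k \<le> lucky_bad i X}
           \<le> real (card bad choose k) * (\<delta>' ^ Suc i) ^ k"
  unfolding lucky_bad_def
  by (rule T.prob_count_ge_le_binomial[OF indep_vars_est_bad finite_bad assms prob_bad_est_ge])

lemma prob_lucky_bad_ge_hoeffding:
  assumes "bad \<noteq> {}" "0 \<le> s"
  shows "T.prob {X \<in> space (sample_table n D). real (card bad) * \<delta>' ^ Suc i + s \<le> real (lucky_bad i X)}
           \<le> exp (- 2 * s\<^sup>2 / real (card bad))"
  unfolding lucky_bad_def
  by (rule T.prob_count_ge_hoeffding[OF indep_vars_est_bad finite_bad assms(1) prob_bad_est_ge assms(2)])

text \<open>Every survivor has an estimate at least that of the discarded best arm, hence is good
  or a lucky bad arm.\<close>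

lemma kept_le_if_best_discarded:
  assumes "a \<in> survivors X i" "\<theta> \<le> est i X a" "a \<notin> survivors X (Suc i)"
  shows "kept (Suc i) \<le> card (survivors X (Suc i) \<inter> good) + lucky_bad i X"
proof -
  have "survivors X (Suc i) \<subseteq> (survivors X (Suc i) \<inter> good) \<union> {b \<in> bad. \<theta> \<le> est i X b}"
  proof
    fix b assume b: "b \<in> survivors X (Suc i)"
    then have "est i X a \<le> est i X b"
      using top_k_ge_discarded[OF assms(1)] assms(3) unfolding survivors_Suc by blast
    moreover have "b < n" using b survivors_subset by auto
    ultimately show "b \<in> (survivors X (Suc i) \<inter> good) \<union> {b \<in> bad. \<theta> \<le> est i X b}"
      using b assms(2) unfolding good_def bad_def by auto
  qed
  then have "card (survivors X (Suc i)) \<le> card ((survivors X (Suc i) \<inter> good) \<union> {b \<in> bad. \<theta> \<le> est i X b})"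
    using finite_survivors finite_bad by (intro card_mono) auto
  also have "\<dots> \<le> card (survivors X (Suc i) \<inter> good) + lucky_bad i X"
    unfolding lucky_bad_def by (rule card_Un_le)
  finally show ?thesis unfolding card_survivors .
qed

lemma sets_lucky_bad_ge: "{X \<in> space (sample_table n D). k \<le> c * lucky_bad i X} \<in> T.events"
proof -
  have "{X \<in> space (sample_table n D). k \<le> c * lucky_bad i X}
      = {X \<in> space (sample_table n D). real k \<le> real c * real (lucky_bad i X)}"
    by (simp flip: of_nat_mult)
  then show ?thesis using borel_measurable_lucky_bad by simp
qed

lemma good_survivor_if_few_lucky:
  assumes "a \<in> survivors X i" "a \<in> good" "\<theta> \<le> est i X a" "lucky_bad i X < kept (Suc i)"
  shows "survivors X (Suc i) \<inter> good \<noteq> {}"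
proof (cases "a \<in> survivors X (Suc i)")
  case False
  then show ?thesis
    using kept_le_if_best_discarded[OF assms(1,3) False] assms(4) by auto
qed (use assms(2) in auto)

lemma final_samples_ge:
  assumes "1 \<le> s"
  shows "2 / ((1 - \<alpha>) * \<epsilon>)\<^sup>2 * ln (1 / \<delta>'') \<le> real (final_samples \<alpha> \<delta>'' \<epsilon> s)"
proof -
  have "ln (1 / \<delta>'') \<le> ln (real s / \<delta>'')"
    using assms \<delta>'' by (simp add: divide_right_mono)
  then have "2 / ((1 - \<alpha>) * \<epsilon>)\<^sup>2 * ln (1 / \<delta>'') \<le> 2 / ((1 - \<alpha>) * \<epsilon>)\<^sup>2 * ln (real s / \<delta>'')"
    by (intro mult_left_mono) auto
  then show ?thesis unfolding final_samples_def by linarith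
qed

lemma final_samples_pos:
  assumes "1 \<le> s"
  shows "0 < final_samples \<alpha> \<delta>'' \<epsilon> s"
proof -
  have "0 < 2 / ((1 - \<alpha>) * \<epsilon>)\<^sup>2 * ln (1 / \<delta>'')" using \<alpha> \<epsilon> \<delta>'' by simp
  then show ?thesis using final_samples_ge[OF assms] by linarith
qed

lemma exp_final_samples_le:
  assumes "1 \<le> s"
  shows "exp (- 2 * real (final_samples \<alpha> \<delta>'' \<epsilon> s) * final_tol\<^sup>2) \<le> \<delta>''"
proof -
  have "(1 - \<alpha>) * \<epsilon> \<noteq> 0" using \<alpha> \<epsilon> by simp
  then have "2 / ((1 - \<alpha>) * \<epsilon>)\<^sup>2 * (2 * final_tol\<^sup>2) = 1"
    unfolding final_tol_def by (simp add: power2_eq_square)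
  then have "ln (1 / \<delta>'') = 2 / ((1 - \<alpha>) * \<epsilon>)\<^sup>2 * ln (1 / \<delta>'') * (2 * final_tol\<^sup>2)"
    by (simp only: ac_simps)
  also have "\<dots> \<le> real (final_samples \<alpha> \<delta>'' \<epsilon> s) * (2 * final_tol\<^sup>2)"
    by (intro mult_right_mono final_samples_ge[OF assms]) simp
  finally have "exp (- 2 * real (final_samples \<alpha> \<delta>'' \<epsilon> s) * final_tol\<^sup>2) \<le> exp (- ln (1 / \<delta>''))"
    by simp
  then show ?thesis using \<delta>'' by (simp add: ln_div)
qed

lemma prob_final_failure: "final_failure \<in> T.events" "T.prob final_failure \<le> 2 * real n ^ 2 * \<delta>''"
proof -
  define E where "E = (\<lambda>(a, s). {X \<in> space (sample_table n D).
    final_tol \<le> \<bar>emp_mean X final_offset (final_samples \<alpha> \<delta>'' \<epsilon> s) a - \<mu> a\<bar>})"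
  have eq: "final_failure = (\<Union>x\<in>{..<n} \<times> {1..n}. E x)"
    unfolding final_failure_def E_def by auto
  have E: "E x \<in> T.events" for x
    unfolding E_def using borel_measurable_emp_mean[OF bandit] by (cases x) simp
  then show "final_failure \<in> T.events" unfolding eq by auto
  have "T.prob final_failure \<le> (\<Sum>x\<in>{..<n} \<times> {1..n}. T.prob (E x))"
    unfolding eq using E by (intro T.finite_measure_subadditive_finite) auto
  also have "\<dots> \<le> (\<Sum>x\<in>{..<n} \<times> {1..n}. 2 * \<delta>'')"
  proof (rule sum_mono)
    fix x assume "x \<in> {..<n} \<times> {1..n}"
    then obtain a s where x: "x = (a, s)" "a < n" "1 \<le> s" by auto
    have "T.prob (E x) \<le> 2 * exp (- 2 * real (final_samples \<alpha> \<delta>'' \<epsilon> s) * final_tol\<^sup>2)"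
      unfolding \<mu>_def E_def x prod.case using \<alpha> \<epsilon>
      by (intro hoeffding_emp_mean(3)[OF bandit x(2) final_samples_pos[OF x(3)]]) (simp add: final_tol_def)
    then show "T.prob (E x) \<le> 2 * \<delta>''" using exp_final_samples_le[OF x(3)] by simp
  qed
  also have "\<dots> = 2 * real n ^ 2 * \<delta>''" by (simp add: power2_eq_square)
  finally show "T.prob final_failure \<le> 2 * real n ^ 2 * \<delta>''" .
qed

lemma output_eps_best:
  assumes R: "R \<in> rand_sets n" and X: "X \<in> space (sample_table n D)" "X \<notin> final_failure"
    and g: "g \<in> good" "g \<in> final_set n \<alpha> \<delta>' \<phi> \<epsilon> R X"
  shows "best_mean n D - \<epsilon> \<le> arm_mean D (aba_output n \<alpha> \<delta>' \<delta>'' \<phi> \<epsilon> R X)"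
proof -
  define U where "U = final_set n \<alpha> \<delta>' \<phi> \<epsilon> R X"
  define f where "f a = emp_mean X final_offset (final_samples \<alpha> \<delta>'' \<epsilon> (card U)) a" for a
  define out where "out = hd (sort_key (\<lambda>a. - f a) (sorted_list_of_set U))"
  have U: "U \<subseteq> {..<n}"
    unfolding U_def final_set_eq using survivors_subset R by (auto simp: rand_sets_def)
  then have "finite U" using finite_subset by blast
  have "g \<in> U" using g U_def by simp
  have "card U \<in> {1..n}"
    using card_mono[OF _ U] \<open>finite U\<close> \<open>g \<in> U\<close> by (auto simp: Suc_le_eq card_gt_0_iff)
  then have close: "\<bar>f a - \<mu> a\<bar> < final_tol" if "a \<in> U" for a
    using X that U unfolding final_failure_def f_def by force
  have "out \<in> U" "f g \<le> f out"
    using hd_sort_key_uminus[OF \<open>finite U\<close>, where f = f] \<open>g \<in> U\<close> unfolding out_def by auto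
  then have "\<mu> g - 2 * final_tol < \<mu> out"
    using close[of out] close[OF \<open>g \<in> U\<close>] by linarith
  moreover have "\<mu>_star - \<alpha> * \<epsilon> \<le> \<mu> g" using g unfolding good_def by simp
  moreover have "\<alpha> * \<epsilon> + 2 * final_tol = \<epsilon>"
    unfolding final_tol_def by (simp add: field_simps)
  moreover have "aba_output n \<alpha> \<delta>' \<delta>'' \<phi> \<epsilon> R X = out"
    unfolding aba_output_def out_def f_def U_def final_offset_def rounds_def keep_def Let_def ..
  ultimately show ?thesis unfolding \<mu>_def \<mu>_star_def by simp
qed

lemma prob_lucky_bad_ge_kept_1:
  assumes "2 \<le> kept 1" "real n * \<delta>' \<le> 1"
  shows "T.prob {X \<in> space (sample_table n D). kept 1 \<le> lucky_bad 0 X} \<le> (real n * \<delta>')\<^sup>2"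
proof -
  have "T.prob {X \<in> space (sample_table n D). kept 1 \<le> lucky_bad 0 X}
      \<le> real (card bad choose kept 1) * \<delta>' ^ kept 1"
    using prob_lucky_bad_ge_binomial[of "kept 1" 0] assms(1) by simp
  also have "\<dots> \<le> real n ^ kept 1 * \<delta>' ^ kept 1"
  proof (rule mult_right_mono)
    have "real (card bad choose kept 1) \<le> real (card bad) ^ kept 1"
      using binomial_le_pow[of "kept 1" "card bad"] by (cases "kept 1 \<le> card bad") (simp_all add: binomial_eq_0 flip: of_nat_power)
    also have "\<dots> \<le> real n ^ kept 1" using card_bad_le by (simp add: power_mono)
    finally show "real (card bad choose kept 1) \<le> real n ^ kept 1" .
  qed (use \<delta>' in simp)
  also have "\<dots> \<le> (real n * \<delta>')\<^sup>2"
    unfolding power_mult_distrib[symmetric] using assms \<delta>' by (intro power_decreasing) auto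
  finally show ?thesis .
qed

lemma aba_learns_single_round:
  assumes "rounds = 1" "2 \<le> kept 1" "real n * \<delta>' \<le> 1"
    and bound: "\<delta>' + (real n * \<delta>')\<^sup>2 + 2 * real n ^ 2 * \<delta>'' \<le> \<delta>"
  shows "aba_learns n \<alpha> \<delta>' \<delta>'' \<phi> \<epsilon> \<delta> D"
proof -
  obtain a where a: "a < n" "\<mu> a = \<mu>_star" using best_arm_exists by blast
  define unlucky where "unlucky = {X \<in> space (sample_table n D). est 0 X a < \<theta>}"
  define lucky where "lucky = {X \<in> space (sample_table n D). kept 1 \<le> lucky_bad 0 X}"
  have unlucky_event: "unlucky \<in> T.events" unfolding unlucky_def using borel_measurable_est by measurable
  have lucky_event: "lucky \<in> T.events" unfolding lucky_def using sets_lucky_bad_ge[of "kept 1" 1 0] by simp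
  show ?thesis
  proof (rule aba_learnsI[OF bandit, where BR = "{}"])
    show "final_failure \<union> unlucky \<union> lucky \<in> T.events"
      using unlucky_event lucky_event prob_final_failure(1) by auto
    fix R X assume R: "R \<in> rand_sets n" and X: "X \<in> space (sample_table n D)"
      "X \<notin> final_failure \<union> unlucky \<union> lucky"
    have "survivors X 1 \<inter> good \<noteq> {}"
      using good_survivor_if_few_lucky[of a X 0] X a best_arm_good
      by (auto simp: unlucky_def lucky_def survivors_def)
    then obtain g where "g \<in> good" "g \<in> final_set n \<alpha> \<delta>' \<phi> \<epsilon> R X"
      unfolding final_set_eq assms(1) by blast
    then show "best_mean n D - \<epsilon> \<le> arm_mean D (aba_output n \<alpha> \<delta>' \<delta>'' \<phi> \<epsilon> R X)"
      using output_eps_best R X by blast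
  next
    have "T.prob unlucky \<le> \<delta>'"
      unfolding unlucky_def using prob_est_lt[of a 0] a by (simp add: \<theta>_def)
    then show "measure (pmf_of_set (rand_sets n)) {} + T.prob (final_failure \<union> unlucky \<union> lucky) \<le> \<delta>"
      using T.measure_Un3_le[OF prob_final_failure(1) unlucky_event lucky_event] prob_final_failure(2)
        prob_lucky_bad_ge_kept_1[OF assms(2,3)] bound unfolding lucky_def by simp
  qed
qed

text \<open>A best arm can only be discarded if the good survivors and the lucky bad arms fill all
  kept slots; when good arms are few and lucky bad arms fill less than half, this is impossible.\<close>

lemma best_arm_survives:
  assumes a: "a < n" "\<mu> a = \<mu>_star" and few_good: "2 * card good \<le> kept rounds"
    and above: "\<And>i. i < rounds \<Longrightarrow> \<theta> \<le> est i X a"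
    and few_lucky: "\<And>i. i < rounds \<Longrightarrow> 2 * lucky_bad i X < kept (Suc i)"
  shows "a \<in> survivors X rounds"
proof -
  have "a \<in> survivors X i" if "i \<le> rounds" for i
    using that
  proof (induction i)
    case (Suc i)
    show ?case
    proof (rule ccontr)
      assume "a \<notin> survivors X (Suc i)"
      then have "kept (Suc i) \<le> card (survivors X (Suc i) \<inter> good) + lucky_bad i X"
        using kept_le_if_best_discarded Suc above by simp
      moreover have "card (survivors X (Suc i) \<inter> good) \<le> card good"
        by (rule card_mono) (auto simp: good_def)
      moreover have "kept rounds \<le> kept (Suc i)" using kept_antimono Suc.prems by simp
      ultimately show False using few_lucky[of i] few_good Suc.prems by linarith
    qed
  qed (use a in \<open>simp add: survivors_def\<close>)
  then show ?thesis by simp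
qed

lemma prob_best_below_threshold:
  assumes "a < n" "\<mu> a = \<mu>_star"
  shows "T.prob (\<Union>i<rounds. {X \<in> space (sample_table n D). est i X a < \<theta>}) \<le> 2 * \<delta>'"
proof -
  have "T.prob (\<Union>i<rounds. {X \<in> space (sample_table n D). est i X a < \<theta>})
      \<le> (\<Sum>i<rounds. T.prob {X \<in> space (sample_table n D). est i X a < \<theta>})"
    using borel_measurable_est by (intro T.finite_measure_subadditive_finite) auto
  also have "\<dots> \<le> (\<Sum>i<rounds. \<delta>' ^ Suc i)"
    using prob_est_lt assms by (intro sum_mono) (simp add: \<theta>_def)
  also have "\<dots> \<le> 2 * \<delta>'"
    using \<delta>' keep_le \<phi> by (intro sum_power_Suc_le) auto
  finally show ?thesis .
qed

text \<open>Since kept (i+1) is about keep^(i+1) n while the failure probability of a bad arm in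
  round i is at most \<delta>'^(i+1), the expected number of lucky bad arms is a small fraction
  of the slots.\<close>

lemma expected_lucky_bad_le:
  assumes "\<delta>' \<le> keep / 8" "2 \<le> kept (Suc i)"
  shows "real n * \<delta>' ^ Suc i \<le> real (kept (Suc i)) / 4"
proof -
  have "\<delta>' ^ Suc i \<le> (keep / 8) ^ Suc i" using assms \<delta>' by (intro power_mono) auto
  also have "\<dots> = keep ^ Suc i / 8 ^ Suc i" by (simp add: power_divide)
  also have "\<dots> \<le> keep ^ Suc i / 8"
    using one_le_power[of "8::real" i] keep by (intro divide_left_mono) auto
  finally have "real n * \<delta>' ^ Suc i \<le> real n * (keep ^ Suc i / 8)"
    by (intro mult_left_mono) auto
  also have "\<dots> = keep ^ Suc i * real n / 8" by simp
  also have "\<dots> \<le> (real (kept (Suc i)) + 2) / 8"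
    using power_le_round_size_add_2[OF keep, of "Suc i" n] unfolding kept_def by simp
  also have "\<dots> \<le> real (kept (Suc i)) / 4" using assms by simp
  finally show ?thesis .
qed

lemma prob_lucky_bad_ge_half_kept:
  assumes "\<delta>' \<le> keep / 8" "i < rounds" "2 \<le> kept rounds"
  shows "T.prob {X \<in> space (sample_table n D). kept (Suc i) \<le> 2 * lucky_bad i X}
          \<le> exp (- (real (kept rounds))\<^sup>2 / (8 * real n))"
proof (cases "bad = {}")
  case True
  then have "{X \<in> space (sample_table n D). kept (Suc i) \<le> 2 * lucky_bad i X} = {}"
    using kept_antimono[of "Suc i" rounds] assms by (auto simp: lucky_bad_def)
  then show ?thesis by (metis measure_empty exp_ge_zero)
next
  case False
  define K where "K = real (kept (Suc i))"
  have K: "real (kept rounds) \<le> K" "2 \<le> K"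
    using kept_antimono[of "Suc i" rounds] assms unfolding K_def by auto
  define s where "s = K / 2 - real (card bad) * \<delta>' ^ Suc i"
  have "real (card bad) * \<delta>' ^ Suc i \<le> real n * \<delta>' ^ Suc i"
    using card_bad_le \<delta>' by (simp add: mult_right_mono)
  then have s: "K / 4 \<le> s"
    using expected_lucky_bad_le[OF assms(1)] K unfolding s_def K_def by fastforce
  have "{X \<in> space (sample_table n D). kept (Suc i) \<le> 2 * lucky_bad i X}
      = {X \<in> space (sample_table n D). real (card bad) * \<delta>' ^ Suc i + s \<le> real (lucky_bad i X)}"
    unfolding s_def K_def by (auto simp flip: of_nat_mult)
  then have "T.prob {X \<in> space (sample_table n D). kept (Suc i) \<le> 2 * lucky_bad i X}
      \<le> exp (- 2 * s\<^sup>2 / real (card bad))"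
    using prob_lucky_bad_ge_hoeffding[OF False] s K by simp
  also have "\<dots> \<le> exp (- (real (kept rounds))\<^sup>2 / (8 * real n))"
  proof -
    have "0 < card bad" using False finite_bad by (simp add: card_gt_0_iff)
    have "(real (kept rounds))\<^sup>2 / (8 * real n) \<le> (K / 4)\<^sup>2 * 2 / real n"
      using K n by (simp add: power2_eq_square field_simps mult_mono)
    also have "\<dots> \<le> s\<^sup>2 * 2 / real n"
      using s K by (simp add: power_mono divide_right_mono)
    also have "\<dots> \<le> 2 * s\<^sup>2 / real (card bad)"
      using \<open>0 < card bad\<close> card_bad_le by (simp add: frac_le)
    finally show ?thesis by simp
  qed
  finally show ?thesis .
qed

lemma prob_rand_set_misses_good:
  "measure (pmf_of_set (rand_sets n)) (if real (kept rounds) < 2 * real (card good) then {R. R \<inter> good = {}} else {})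
    \<le> exp (- real (rand_set_size n) * real (kept rounds) / (2 * real n))"
proof (cases "real (kept rounds) < 2 * real (card good)")
  case True
  have "measure (pmf_of_set (rand_sets n)) {R. R \<inter> good = {}}
      \<le> exp (- real (rand_set_size n) * real (card good) / real n)"
    by (rule prob_rand_set_disjoint) (auto simp: good_def)
  also have "\<dots> \<le> exp (- real (rand_set_size n) * real (kept rounds) / (2 * real n))"
    using True n by (simp add: field_simps mult_left_mono)
  finally show ?thesis using True by simp
qed simp

lemma aba_learns_multi_round:
  assumes "\<delta>' \<le> keep / 8" "2 \<le> kept rounds"
    and bound: "2 * \<delta>' + real rounds * exp (- (real (kept rounds))\<^sup>2 / (8 * real n))
      + exp (- real (rand_set_size n) * real (kept rounds) / (2 * real n)) + 2 * real n ^ 2 * \<delta>'' \<le> \<delta>"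
  shows "aba_learns n \<alpha> \<delta>' \<delta>'' \<phi> \<epsilon> \<delta> D"
proof -
  obtain a where a: "a < n" "\<mu> a = \<mu>_star" using best_arm_exists by blast
  define unlucky where "unlucky = (\<Union>i<rounds. {X \<in> space (sample_table n D). est i X a < \<theta>})"
  define lucky where "lucky = (\<Union>i<rounds. {X \<in> space (sample_table n D). kept (Suc i) \<le> 2 * lucky_bad i X})"
  define misses where
    "misses = (if real (kept rounds) < 2 * real (card good) then {R. R \<inter> good = {}} else {})"
  have unlucky_event: "unlucky \<in> T.events" unfolding unlucky_def using borel_measurable_est by measurable
  have lucky_event: "lucky \<in> T.events" unfolding lucky_def using sets_lucky_bad_ge by auto
  show ?thesis
  proof (rule aba_learnsI[OF bandit, where BR = misses])
    show "final_failure \<union> unlucky \<union> lucky \<in> T.events"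
      using unlucky_event lucky_event prob_final_failure(1) by auto
    fix R X assume R: "R \<in> rand_sets n" "R \<notin> misses"
      and X: "X \<in> space (sample_table n D)" "X \<notin> final_failure \<union> unlucky \<union> lucky"
    have "\<exists>g \<in> good. g \<in> survivors X rounds \<union> R"
    proof (cases "real (kept rounds) < 2 * real (card good)")
      case False
      then have "a \<in> survivors X rounds"
        using X by (intro best_arm_survives a) (auto simp: unlucky_def lucky_def not_le not_less)
      then show ?thesis using best_arm_good a by blast
    qed (use R in \<open>auto simp: misses_def\<close>)
    then show "best_mean n D - \<epsilon> \<le> arm_mean D (aba_output n \<alpha> \<delta>' \<delta>'' \<phi> \<epsilon> R X)"
      using output_eps_best R X unfolding final_set_eq by blast
  next
    have "T.prob lucky \<le> (\<Sum>i<rounds. T.prob {X \<in> space (sample_table n D). kept (Suc i) \<le> 2 * lucky_bad i X})"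
      unfolding lucky_def using sets_lucky_bad_ge by (intro T.finite_measure_subadditive_finite) auto
    also have "\<dots> \<le> (\<Sum>i<rounds. exp (- (real (kept rounds))\<^sup>2 / (8 * real n)))"
      using prob_lucky_bad_ge_half_kept[OF assms(1) _ assms(2)] by (intro sum_mono) simp
    also have "\<dots> = real rounds * exp (- (real (kept rounds))\<^sup>2 / (8 * real n))" by simp
    finally show "measure (pmf_of_set (rand_sets n)) misses + T.prob (final_failure \<union> unlucky \<union> lucky) \<le> \<delta>"
      using T.measure_Un3_le[OF prob_final_failure(1) unlucky_event lucky_event] prob_final_failure(2)
        prob_best_below_threshold[OF a] prob_rand_set_misses_good bound
      unfolding unlucky_def misses_def by linarith
  qed
qed

lemma elimination_samples_le:
  "real (\<Sum>i<rounds. card (survivors X i) * round_samples \<alpha> \<delta>' \<epsilon> i)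
    \<le> real n * (\<Sum>i<rounds. real (Suc i) * keep ^ i) * (2 / (\<alpha> * \<epsilon>)\<^sup>2 * ln (1 / \<delta>') + 1)"
proof -
  define c where "c = 2 / (\<alpha> * \<epsilon>)\<^sup>2 * ln (1 / \<delta>')"
  have "0 \<le> c" unfolding c_def using \<delta>' \<delta>'_lt_1 by simp
  then have c: "0 \<le> c" "real (nat \<lceil>c\<rceil>) \<le> c + 1" by linarith+
  have "real (\<Sum>i<rounds. card (survivors X i) * round_samples \<alpha> \<delta>' \<epsilon> i)
      = (\<Sum>i<rounds. real (kept i) * (real (Suc i) * real (nat \<lceil>c\<rceil>)))"
    unfolding card_survivors round_samples_def c_def by (simp add: algebra_simps)
  also have "\<dots> \<le> (\<Sum>i<rounds. (keep ^ i * real n) * (real (Suc i) * (c + 1)))"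
    using round_size_le_power[OF keep(1)] c keep unfolding kept_def
    by (intro sum_mono mult_mono mult_left_mono) auto
  also have "\<dots> = real n * (\<Sum>i<rounds. real (Suc i) * keep ^ i) * (c + 1)"
    by (simp add: sum_distrib_left sum_distrib_right algebra_simps)
  finally show ?thesis unfolding c_def .
qed

lemma final_stage_samples_le:
  fixes X :: "nat \<times> nat \<Rightarrow> real"
  assumes "R \<in> rand_sets n"
  defines "U \<equiv> final_set n \<alpha> \<delta>' \<phi> \<epsilon> R X"
  shows "real (card U * final_samples \<alpha> \<delta>'' \<epsilon> (card U))
    \<le> (real n powr (3/4) / 2 + real n powr (7/8) / 2) * (2 / ((1 - \<alpha>) * \<epsilon>)\<^sup>2 * ln (real n / \<delta>'') + 1)"
proof (cases "card U = 0")
  case False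
  define c where "c = 2 / ((1 - \<alpha>) * \<epsilon>)\<^sup>2"
  have "0 < c" unfolding c_def using \<alpha> \<epsilon> by simp
  have U: "U \<subseteq> {..<n}"
    unfolding U_def final_set_eq using survivors_subset assms(1) by (auto simp: rand_sets_def)
  have "card U \<le> card (survivors X rounds) + card R"
    unfolding U_def final_set_eq by (rule card_Un_le)
  then have card_U: "real (card U) \<le> real n powr (3/4) / 2 + real n powr (7/8) / 2"
    using kept_rounds_le rand_set_size_le_powr[of n] assms(1)
    unfolding card_survivors rand_sets_def by simp
  have "0 \<le> ln (real (card U) / \<delta>'')" "ln (real (card U) / \<delta>'') \<le> ln (real n / \<delta>'')"
    using False card_mono[OF _ U] \<delta>'' by (simp_all add: divide_right_mono)
  then have "0 \<le> c * ln (real (card U) / \<delta>'')" "c * ln (real (card U) / \<delta>'') \<le> c * ln (real n / \<delta>'')"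
    using \<open>0 < c\<close> by (simp_all add: mult_left_mono)
  then have "real (final_samples \<alpha> \<delta>'' \<epsilon> (card U)) \<le> c * ln (real n / \<delta>'') + 1"
    unfolding final_samples_def c_def[symmetric] by linarith
  from mult_mono'[OF card_U this]
  have "real (card U) * real (final_samples \<alpha> \<delta>'' \<epsilon> (card U))
      \<le> (real n powr (3/4) / 2 + real n powr (7/8) / 2) * (c * ln (real n / \<delta>'') + 1)"
    by simp
  then show ?thesis unfolding c_def by simp
next
  case True
  have "0 \<le> 2 / ((1 - \<alpha>) * \<epsilon>)\<^sup>2 * ln (real n / \<delta>'') + 1"
    using n \<delta>'' by simp
  then show ?thesis using True by simp
qed

lemma aba_samples_le:
  assumes "R \<in> rand_sets n"
  shows "real (aba_samples n \<alpha> \<delta>' \<delta>'' \<phi> \<epsilon> R X)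
    \<le> real n * (\<Sum>i<rounds. real (Suc i) * keep ^ i) * (2 / (\<alpha> * \<epsilon>)\<^sup>2 * ln (1 / \<delta>') + 1)
      + (real n powr (3/4) / 2 + real n powr (7/8) / 2) * (2 / ((1 - \<alpha>) * \<epsilon>)\<^sup>2 * ln (real n / \<delta>'') + 1)"
  using elimination_samples_le[of X] final_stage_samples_le[OF assms, of X]
  unfolding aba_samples_def survivors_def rounds_def keep_def Let_def by simp

end

section \<open>Choice of the parameters\<close>

text \<open>The constant p0 of the analysis: the algorithm runs with alpha = 1 - p0, and p0 is
  also the fraction of arms kept per round when n^2 delta is large.\<close>

definition slack :: "real \<Rightarrow> real" where
  "slack lam = lam / (16 + 4 * lam)"

lemma slack_pos: "0 < lam \<Longrightarrow> 0 < slack lam"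
  unfolding slack_def by simp

lemma slack_le: "0 < lam \<Longrightarrow> slack lam \<le> 1/4"
  unfolding slack_def by (simp add: field_simps)

lemma two_div_one_minus_slack_pow4_le:
  assumes "0 < lam"
  shows "2 / (1 - slack lam) ^ 4 \<le> 2 + lam / 2"
proof -
  have "1 - 4 * slack lam \<le> (1 - slack lam) ^ 4"
    using Bernoulli_inequality[of "- slack lam" 4] slack_le[OF assms] by simp
  moreover have "1 - 4 * slack lam = 4 / (4 + lam)"
    unfolding slack_def using assms by (simp add: field_simps)
  ultimately have "2 / (1 - slack lam) ^ 4 \<le> 2 / (4 / (4 + lam))"
    using assms slack_le[OF assms] by (intro divide_left_mono) auto
  also have "\<dots> = 2 + lam / 2" using assms by (simp add: field_simps)
  finally show ?thesis .
qed

definition small_confidence :: "real \<Rightarrow> real \<Rightarrow> bool" where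
  "small_confidence lam \<delta> \<longleftrightarrow>
     \<delta> \<le> slack lam \<and> (2 + lam / 2) * ln 8 + 16 / 9 + 1 \<le> lam / 4 * ln (1 / \<delta>)"

lemma small_confidence_near_0:
  assumes "0 < lam"
  obtains \<delta>0 where "0 < \<delta>0" "\<And>\<delta>. 0 < \<delta> \<Longrightarrow> \<delta> < \<delta>0 \<Longrightarrow> small_confidence lam \<delta>"
proof
  define C where "C = (2 + lam / 2) * ln 8 + 16 / 9 + 1"
  show "0 < min (slack lam) (exp (- 4 * C / lam))"
    using slack_pos[OF assms] by simp
  fix \<delta> assume \<delta>: "0 < \<delta>" "\<delta> < min (slack lam) (exp (- 4 * C / lam))"
  then have "ln \<delta> < ln (exp (- 4 * C / lam))"
    by (subst ln_less_cancel_iff) auto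
  then have "4 * C / lam < ln (1 / \<delta>)"
    using \<delta> by (simp add: ln_div)
  then have "C \<le> lam / 4 * ln (1 / \<delta>)"
    using assms by (simp add: field_simps)
  then show "small_confidence lam \<delta>"
    using \<delta> unfolding small_confidence_def C_def by simp
qed

definition large_arm_count :: "real \<Rightarrow> nat \<Rightarrow> bool" where
  "large_arm_count lam n \<longleftrightarrow> 2 \<le> n \<and> 6 \<le> real n powr (3/4)
     \<and> 2 \<le> slack lam * real n powr (3/4) / 2 - 1 \<and> 0 \<le> real n powr (7/8) / 2 - 1
     \<and> real n * exp (- (slack lam * real n powr (3/4) / 2 - 1)\<^sup>2 / (8 * real n))
       + exp (- (real n powr (7/8) / 2 - 1) * (slack lam * real n powr (3/4) / 2 - 1) / (2 * real n))
       \<le> 2 / (real n)\<^sup>2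
     \<and> real n powr (-1/8) * (2 * (ln 8 + 3 * ln (real n)) / (slack lam)\<^sup>2 + 1) \<le> 1
     \<and> real n powr (-1/8) * (2 / (slack lam)\<^sup>2) \<le> lam / 4"

lemma eventually_large_arm_count:
  assumes "0 < lam"
  shows "eventually (large_arm_count lam) sequentially"
proof -
  define p where "p = slack lam"
  have "0 < p" unfolding p_def using slack_pos[OF assms] .
  have "eventually (\<lambda>n. 2 \<le> n) sequentially" by (rule eventually_ge_at_top)
  moreover have "eventually (\<lambda>n. 6 \<le> real n powr (3/4)) sequentially" by real_asymp
  moreover have "eventually (\<lambda>n. 2 \<le> p * real n powr (3/4) / 2 - 1) sequentially"
    using \<open>0 < p\<close> by real_asymp
  moreover have "eventually (\<lambda>n. 0 \<le> real n powr (7/8) / 2 - 1) sequentially" by real_asymp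
  moreover have "eventually (\<lambda>n. real n * exp (- (p * real n powr (3/4) / 2 - 1)\<^sup>2 / (8 * real n))
       + exp (- (real n powr (7/8) / 2 - 1) * (p * real n powr (3/4) / 2 - 1) / (2 * real n))
       \<le> 2 / (real n)\<^sup>2) sequentially"
    using \<open>0 < p\<close> by real_asymp
  moreover have "eventually (\<lambda>n. real n powr (-1/8) * (2 * (ln 8 + 3 * ln (real n)) / p\<^sup>2 + 1) \<le> 1)
      sequentially"
    using \<open>0 < p\<close> by real_asymp
  moreover have "eventually (\<lambda>n. real n powr (-1/8) * (2 / p\<^sup>2) \<le> lam / 4) sequentially"
    using \<open>0 < p\<close> assms by real_asymp
  ultimately show ?thesis unfolding large_arm_count_def p_def[symmetric] by eventually_elim blast
qed

lemma elimination_cost_le: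
  fixes x L \<epsilon> S :: real
  assumes lam: "0 < lam" and "0 \<le> x" "0 < \<epsilon>" "\<epsilon> < 1" "0 \<le> L" "0 \<le> S" "S \<le> 1 / (1 - slack lam)\<^sup>2"
  shows "x * S * (2 / ((1 - slack lam) * \<epsilon>)\<^sup>2 * (ln 8 + L) + 1)
    \<le> x / \<epsilon>\<^sup>2 * ((2 + lam / 2) * (ln 8 + L) + 16 / 9)"
proof -
  define r where "r = 1 - slack lam"
  have r: "3/4 \<le> r" "r \<le> 1" using slack_le[OF lam] slack_pos[OF lam] unfolding r_def by auto
  have "1 / r\<^sup>2 \<le> 16 / 9"
    using power_mono[OF r(1), of 2] r by (simp add: field_simps)
  have "1 \<le> 1 / \<epsilon>\<^sup>2" using assms by (simp add: field_simps power_le_one)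
  then have "16 / 9 \<le> 16 / 9 * (1 / \<epsilon>\<^sup>2)" by simp
  then have r_le: "1 / r\<^sup>2 \<le> 16 / 9 * (1 / \<epsilon>\<^sup>2)"
    using \<open>1 / r\<^sup>2 \<le> 16 / 9\<close> by linarith
  have "S * (2 / (r * \<epsilon>)\<^sup>2 * (ln 8 + L) + 1) \<le> 1 / r\<^sup>2 * (2 / (r * \<epsilon>)\<^sup>2 * (ln 8 + L) + 1)"
    using assms unfolding r_def by (intro mult_right_mono) auto
  also have "\<dots> = 2 / r ^ 4 * (ln 8 + L) / \<epsilon>\<^sup>2 + 1 / r\<^sup>2"
    using r assms by (simp add: field_simps power2_eq_square power4_eq_xxxx)
  also have "\<dots> \<le> (2 + lam / 2) * (ln 8 + L) / \<epsilon>\<^sup>2 + 16 / 9 * (1 / \<epsilon>\<^sup>2)"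
    using two_div_one_minus_slack_pow4_le[OF lam] r_le assms
    unfolding r_def by (intro add_mono divide_right_mono mult_right_mono) auto
  also have "\<dots> = ((2 + lam / 2) * (ln 8 + L) + 16 / 9) / \<epsilon>\<^sup>2"
    by (simp add: add_divide_distrib)
  finally have "x * (S * (2 / (r * \<epsilon>)\<^sup>2 * (ln 8 + L) + 1)) \<le> x * (((2 + lam / 2) * (ln 8 + L) + 16 / 9) / \<epsilon>\<^sup>2)"
    using assms by (intro mult_left_mono) auto
  then show ?thesis unfolding r_def by (simp add: mult.assoc)
qed

lemma final_stage_cost_le:
  fixes x L \<epsilon> :: real
  assumes "1 \<le> x" "0 < \<epsilon>" "\<epsilon> < 1" "0 \<le> L" "0 < p"
    and log_small: "x powr (-1/8) * (2 * (ln 8 + 3 * ln x) / p\<^sup>2 + 1) \<le> 1"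
    and const_small: "x powr (-1/8) * (2 / p\<^sup>2) \<le> lam / 4"
  shows "(x powr (3/4) / 2 + x powr (7/8) / 2) * (2 / (p * \<epsilon>)\<^sup>2 * (ln 8 + 3 * ln x + L) + 1)
    \<le> x / \<epsilon>\<^sup>2 * (1 + lam / 4 * L)"
proof -
  define W where "W = 2 * (ln 8 + 3 * ln x) / p\<^sup>2 + 1"
  have "1 \<le> 1 / \<epsilon>\<^sup>2" using assms by (simp add: field_simps power_le_one)
  have "0 \<le> ln x" using assms by simp
  have "x powr (3/4) \<le> x powr (7/8)" using assms by (intro powr_mono) auto
  moreover have "0 \<le> 2 / (p * \<epsilon>)\<^sup>2 * (ln 8 + 3 * ln x + L) + 1"
    using \<open>0 \<le> ln x\<close> assms by simp
  ultimately have "(x powr (3/4) / 2 + x powr (7/8) / 2) * (2 / (p * \<epsilon>)\<^sup>2 * (ln 8 + 3 * ln x + L) + 1)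
      \<le> x powr (7/8) * (2 / (p * \<epsilon>)\<^sup>2 * (ln 8 + 3 * ln x + L) + 1)"
    by (intro mult_right_mono) auto
  also have "\<dots> \<le> x powr (7/8) * ((W + L * (2 / p\<^sup>2)) / \<epsilon>\<^sup>2)"
  proof (rule mult_left_mono)
    have "2 / (p * \<epsilon>)\<^sup>2 * (ln 8 + 3 * ln x + L) + 1 = (W - 1 + L * (2 / p\<^sup>2)) / \<epsilon>\<^sup>2 + 1"
      unfolding W_def using assms by (simp add: field_simps power2_eq_square)
    then show "2 / (p * \<epsilon>)\<^sup>2 * (ln 8 + 3 * ln x + L) + 1 \<le> (W + L * (2 / p\<^sup>2)) / \<epsilon>\<^sup>2"
      using \<open>1 \<le> 1 / \<epsilon>\<^sup>2\<close> by (simp add: add_divide_distrib diff_divide_distrib)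
  qed simp
  also have "\<dots> = x / \<epsilon>\<^sup>2 * (x powr (-1/8) * W + L * (x powr (-1/8) * (2 / p\<^sup>2)))"
  proof -
    have "x powr (7/8) = x * x powr (-1/8)"
      using powr_add[of x 1 "-1/8"] assms by simp
    then show ?thesis by (simp add: field_simps)
  qed
  also have "\<dots> \<le> x / \<epsilon>\<^sup>2 * (1 + L * (lam / 4))"
    using log_small const_small assms unfolding W_def
    by (intro mult_left_mono add_mono) auto
  finally show ?thesis by (simp add: mult.commute)
qed

lemma ln_confidence_parameters:
  assumes "0 < \<delta>" "0 < n"
  shows "ln (1 / (\<delta> / 8)) = ln 8 + ln (1 / \<delta>)"
    and "ln (real n / (\<delta> / (8 * real n ^ 2))) = ln 8 + 3 * ln (real n) + ln (1 / \<delta>)"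
proof -
  show "ln (1 / (\<delta> / 8)) = ln 8 + ln (1 / \<delta>)"
    using assms by (simp add: ln_div)
  have "real n / (\<delta> / (8 * real n ^ 2)) = 8 * real n ^ 3 / \<delta>"
    using assms by (simp add: field_simps power2_eq_square power3_eq_cube)
  then show "ln (real n / (\<delta> / (8 * real n ^ 2))) = ln 8 + 3 * ln (real n) + ln (1 / \<delta>)"
    using assms by (simp add: ln_div ln_mult ln_realpow)
qed

lemma exp_tails_mono:
  fixes t x k K r R :: real
  assumes "0 \<le> t" "t \<le> x" "0 < x" "0 \<le> k" "k \<le> K" "0 \<le> r" "r \<le> R"
  shows "t * exp (- K\<^sup>2 / (8 * x)) + exp (- R * K / (2 * x)) \<le> x * exp (- k\<^sup>2 / (8 * x)) + exp (- r * k / (2 * x))"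
proof (rule add_mono)
  show "t * exp (- K\<^sup>2 / (8 * x)) \<le> x * exp (- k\<^sup>2 / (8 * x))"
    using assms by (intro mult_mono) (auto intro!: divide_right_mono power_mono)
  show "exp (- R * K / (2 * x)) \<le> exp (- r * k / (2 * x))"
    using assms by (simp add: divide_right_mono mult_mono)
qed

lemma single_round_parameters:
  assumes "2 \<le> n" "0 < \<delta>" "real n ^ 2 * \<delta> \<le> 4"
  shows "\<delta> / 8 \<le> real n powr (-1/4) / 2" "real n powr (-1/4) / 2 \<le> 1/2" "real n * \<delta> \<le> 2"
proof -
  have "real n powr 2 = real n ^ 2" using assms by (subst powr_numeral) auto
  then have "real n powr (-2) = 1 / real n ^ 2" by (simp add: powr_minus divide_inverse)
  moreover have "real n powr (-2) \<le> real n powr (-1/4)" using assms by (intro powr_mono) auto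
  moreover have "\<delta> \<le> 4 / real n ^ 2" using assms by (simp add: field_simps)
  ultimately show "\<delta> / 8 \<le> real n powr (-1/4) / 2" by (simp add: field_simps)
  show "real n powr (-1/4) / 2 \<le> 1/2" using powr_mono[of "-1/4" 0 "real n"] assms by simp
  have "real n * \<delta> = real n ^ 2 * \<delta> / real n" using assms by (simp add: power2_eq_square)
  also have "\<dots> \<le> 4 / real n" using assms by (intro divide_right_mono) auto
  also have "\<dots> \<le> 2" using assms by (simp add: field_simps)
  finally show "real n * \<delta> \<le> 2" .
qed

definition aba_guarantee :: "real \<Rightarrow> nat \<Rightarrow> real \<Rightarrow> real \<Rightarrow> real \<Rightarrow> real \<Rightarrow> real \<Rightarrow> bool" where
  "aba_guarantee lam n \<delta> \<alpha> \<delta>' \<delta>'' \<phi> \<longleftrightarrow>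
     0 < \<alpha> \<and> \<alpha> < 1 \<and> 0 < \<delta>' \<and> 0 < \<delta>'' \<and> 0 \<le> \<phi> \<and> \<delta>' + \<phi> < 1 \<and>
     (\<forall>\<epsilon> D. 0 < \<epsilon> \<and> \<epsilon> < 1 \<and> bandit_instance n D \<longrightarrow>
        aba_learns n \<alpha> \<delta>' \<delta>'' \<phi> \<epsilon> \<delta> D \<and>
        (\<forall>R \<in> rand_sets n. \<forall>X.
           real (aba_samples n \<alpha> \<delta>' \<delta>'' \<phi> \<epsilon> R X) \<le> (2 + lam) * real n / \<epsilon>\<^sup>2 * ln (1 / \<delta>)))"

lemma aba_samples_le_target:
  assumes "aba_analysis n D (1 - slack lam) (\<delta> / 8) (\<delta> / (8 * real n ^ 2)) \<phi> \<epsilon>"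
    and lam: "0 < lam" and \<epsilon>_lt_1: "\<epsilon> < 1" and \<delta>: "0 < \<delta>"
    and large: "large_arm_count lam n" and small: "small_confidence lam \<delta>"
    and sum: "(\<Sum>i<num_rounds n (\<delta> / 8 + \<phi>). real (Suc i) * (\<delta> / 8 + \<phi>) ^ i) \<le> 1 / (1 - slack lam)\<^sup>2"
    and R: "R \<in> rand_sets n"
  shows "real (aba_samples n (1 - slack lam) (\<delta> / 8) (\<delta> / (8 * real n ^ 2)) \<phi> \<epsilon> R X)
    \<le> (2 + lam) * real n / \<epsilon>\<^sup>2 * ln (1 / \<delta>)"
proof -
  interpret aba_analysis n D "1 - slack lam" "\<delta> / 8" "\<delta> / (8 * real n ^ 2)" \<phi> \<epsilon> by fact
  define L where "L = ln (1 / \<delta>)"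
  have "0 \<le> L" "(2 + lam / 2) * ln 8 + 16 / 9 + 1 \<le> lam / 4 * L"
    using small slack_le[OF lam] \<delta> unfolding small_confidence_def L_def by auto
  define S where "S = (\<Sum>i<rounds. real (Suc i) * keep ^ i)"
  have "1 - (1 - slack lam) = slack lam" by simp
  then have "real (aba_samples n (1 - slack lam) (\<delta> / 8) (\<delta> / (8 * real n ^ 2)) \<phi> \<epsilon> R X)
      \<le> real n * S * (2 / ((1 - slack lam) * \<epsilon>)\<^sup>2 * (ln 8 + L) + 1)
        + (real n powr (3/4) / 2 + real n powr (7/8) / 2)
          * (2 / (slack lam * \<epsilon>)\<^sup>2 * (ln 8 + 3 * ln (real n) + L) + 1)"
    using aba_samples_le[OF R, of X] ln_confidence_parameters[OF \<delta> n, folded L_def]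
    unfolding S_def by (simp only:)
  also have "\<dots> \<le> real n / \<epsilon>\<^sup>2 * ((2 + lam / 2) * (ln 8 + L) + 16 / 9) + real n / \<epsilon>\<^sup>2 * (1 + lam / 4 * L)"
  proof (rule add_mono)
    have "0 \<le> S" unfolding S_def using keep by (intro sum_nonneg) auto
    moreover have "S \<le> 1 / (1 - slack lam)\<^sup>2" using sum unfolding S_def rounds_def keep_def .
    ultimately show "real n * S * (2 / ((1 - slack lam) * \<epsilon>)\<^sup>2 * (ln 8 + L) + 1)
        \<le> real n / \<epsilon>\<^sup>2 * ((2 + lam / 2) * (ln 8 + L) + 16 / 9)"
      using \<epsilon> \<epsilon>_lt_1 \<open>0 \<le> L\<close> by (intro elimination_cost_le[OF lam]) auto
    show "(real n powr (3/4) / 2 + real n powr (7/8) / 2)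
          * (2 / (slack lam * \<epsilon>)\<^sup>2 * (ln 8 + 3 * ln (real n) + L) + 1)
        \<le> real n / \<epsilon>\<^sup>2 * (1 + lam / 4 * L)"
      using large n \<epsilon> \<epsilon>_lt_1 \<open>0 \<le> L\<close> slack_pos[OF lam] unfolding large_arm_count_def
      by (intro final_stage_cost_le) auto
  qed
  also have "\<dots> = real n / \<epsilon>\<^sup>2 * ((2 + lam / 2) * (ln 8 + L) + 16 / 9 + (1 + lam / 4 * L))"
    by (simp only: distrib_left)
  also have "\<dots> \<le> real n / \<epsilon>\<^sup>2 * ((2 + lam) * L)"
    using \<open>(2 + lam / 2) * ln 8 + 16 / 9 + 1 \<le> lam / 4 * L\<close> by (intro mult_left_mono) (simp_all add: algebra_simps)
  also have "\<dots> = (2 + lam) * real n / \<epsilon>\<^sup>2 * L" by simp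
  finally show ?thesis unfolding L_def .
qed

lemma aba_guaranteeI:
  assumes lam: "0 < lam" and large: "large_arm_count lam n" and small: "small_confidence lam \<delta>"
    and \<delta>: "0 < \<delta>" and \<phi>: "0 \<le> \<phi>" "\<delta> / 8 + \<phi> \<le> 1/2"
    and sum: "(\<Sum>i<num_rounds n (\<delta> / 8 + \<phi>). real (Suc i) * (\<delta> / 8 + \<phi>) ^ i) \<le> 1 / (1 - slack lam)\<^sup>2"
    and learns: "\<And>\<epsilon> D. aba_analysis n D (1 - slack lam) (\<delta> / 8) (\<delta> / (8 * real n ^ 2)) \<phi> \<epsilon> \<Longrightarrow>
        aba_learns n (1 - slack lam) (\<delta> / 8) (\<delta> / (8 * real n ^ 2)) \<phi> \<epsilon> \<delta> D"
  shows "aba_guarantee lam n \<delta> (1 - slack lam) (\<delta> / 8) (\<delta> / (8 * real n ^ 2)) \<phi>"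
proof -
  have n: "2 \<le> n" using large unfolding large_arm_count_def by simp
  have "\<delta> < 1" using small slack_le[OF lam] unfolding small_confidence_def by simp
  have "\<delta> / (8 * real n ^ 2) \<le> \<delta> / 8"
    using n \<delta> by (intro divide_left_mono) (auto simp: one_le_power)
  then have "\<delta> / (8 * real n ^ 2) < 1" using \<open>\<delta> < 1\<close> by linarith
  show ?thesis
    unfolding aba_guarantee_def
  proof (intro conjI allI impI ballI)
    show "0 < 1 - slack lam" "1 - slack lam < 1" "0 < \<delta> / 8" "0 < \<delta> / (8 * real n ^ 2)" "0 \<le> \<phi>"
      "\<delta> / 8 + \<phi> < 1"
      using slack_pos[OF lam] slack_le[OF lam] \<delta> \<phi> n by auto
    fix \<epsilon> :: real and D assume \<epsilon>D: "0 < \<epsilon> \<and> \<epsilon> < 1 \<and> bandit_instance n D"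
    have A: "aba_analysis n D (1 - slack lam) (\<delta> / 8) (\<delta> / (8 * real n ^ 2)) \<phi> \<epsilon>"
      using \<epsilon>D n \<delta> \<phi> \<open>\<delta> < 1\<close> \<open>\<delta> / (8 * real n ^ 2) < 1\<close> slack_pos[OF lam] slack_le[OF lam]
      by unfold_locales auto
    then show "aba_learns n (1 - slack lam) (\<delta> / 8) (\<delta> / (8 * real n ^ 2)) \<phi> \<epsilon> \<delta> D"
      by (rule learns)
    fix R X assume "R \<in> rand_sets n"
    then show "real (aba_samples n (1 - slack lam) (\<delta> / 8) (\<delta> / (8 * real n ^ 2)) \<phi> \<epsilon> R X)
        \<le> (2 + lam) * real n / \<epsilon>\<^sup>2 * ln (1 / \<delta>)"
      using \<epsilon>D by (intro aba_samples_le_target[OF A lam _ \<delta> large small sum]) auto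
  qed
qed

lemma aba_guarantee_single_round:
  assumes lam: "0 < lam" and large: "large_arm_count lam n" and small: "small_confidence lam \<delta>"
    and \<delta>: "0 < \<delta>" "real n ^ 2 * \<delta> \<le> 4"
  shows "aba_guarantee lam n \<delta> (1 - slack lam) (\<delta> / 8) (\<delta> / (8 * real n ^ 2)) (real n powr (-1/4) / 2 - \<delta> / 8)"
proof -
  define q where "q = real n powr (-1/4) / 2"
  have n_ge: "2 \<le> n" "6 \<le> real n powr (3/4)" using large unfolding large_arm_count_def by simp_all
  note single_round_parameters[OF n_ge(1) \<delta>, folded q_def]
  have "aba_guarantee lam n \<delta> (1 - slack lam) (\<delta> / 8) (\<delta> / (8 * real n ^ 2)) (q - \<delta> / 8)"
  proof (rule aba_guaranteeI[OF lam large small \<delta>(1)])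
    show "0 \<le> q - \<delta> / 8" "\<delta> / 8 + (q - \<delta> / 8) \<le> 1/2"
      using \<open>\<delta> / 8 \<le> q\<close> \<open>q \<le> 1/2\<close> by simp_all
    have "1 \<le> 1 / (1 - slack lam)\<^sup>2"
      using slack_pos[OF lam] slack_le[OF lam] by (simp add: field_simps power_le_one)
    then show "(\<Sum>i<num_rounds n (\<delta> / 8 + (q - \<delta> / 8)). real (Suc i) * (\<delta> / 8 + (q - \<delta> / 8)) ^ i)
        \<le> 1 / (1 - slack lam)\<^sup>2"
      using round_size_single_round(1)[of n] n_ge unfolding q_def by simp
    fix \<epsilon> D
    assume "aba_analysis n D (1 - slack lam) (\<delta> / 8) (\<delta> / (8 * real n ^ 2)) (q - \<delta> / 8) \<epsilon>"
    then interpret aba_analysis n D "1 - slack lam" "\<delta> / 8" "\<delta> / (8 * real n ^ 2)" "q - \<delta> / 8" \<epsilon> .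
    have keep_eq: "keep = real n powr (-1/4) / 2" unfolding keep_def by (simp add: q_def)
    show "aba_learns n (1 - slack lam) (\<delta> / 8) (\<delta> / (8 * real n ^ 2)) (q - \<delta> / 8) \<epsilon> \<delta> D"
    proof (rule aba_learns_single_round)
      show "rounds = 1"
        unfolding rounds_def keep_eq using round_size_single_round(1)[of n] \<open>2 \<le> n\<close> by simp
      show "2 \<le> kept 1"
        unfolding kept_def keep_eq using round_size_single_round(2)[of n] \<open>2 \<le> n\<close> \<open>6 \<le> real n powr (3/4)\<close>
        by simp linarith
      show "real n * (\<delta> / 8) \<le> 1" using \<open>real n * \<delta> \<le> 2\<close> by simp
      have "(real n * (\<delta> / 8))\<^sup>2 = real n ^ 2 * \<delta> * \<delta> / 64" by (simp add: power2_eq_square)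
      also have "\<dots> \<le> 4 * \<delta> / 64" using \<delta> by (intro divide_right_mono mult_right_mono) auto
      finally show "\<delta> / 8 + (real n * (\<delta> / 8))\<^sup>2 + 2 * real n ^ 2 * (\<delta> / (8 * real n ^ 2)) \<le> \<delta>"
        using \<delta> \<open>2 \<le> n\<close> by simp
    qed
  qed
  then show ?thesis unfolding q_def .
qed

lemma aba_guarantee_multi_round:
  assumes lam: "0 < lam" and large: "large_arm_count lam n" and small: "small_confidence lam \<delta>"
    and \<delta>: "0 < \<delta>" "4 < real n ^ 2 * \<delta>"
  shows "aba_guarantee lam n \<delta> (1 - slack lam) (\<delta> / 8) (\<delta> / (8 * real n ^ 2)) (slack lam - \<delta> / 8)"
proof -
  define p where "p = slack lam"
  define k where "k = p * real n powr (3/4) / 2 - 1"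
  define r where "r = real n powr (7/8) / 2 - 1"
  have p: "0 < p" "p \<le> 1/4" "\<delta> \<le> p"
    using slack_pos[OF lam] slack_le[OF lam] small unfolding p_def small_confidence_def by auto
  have "2 \<le> n" and "2 \<le> k" "0 \<le> r"
    and tail: "real n * exp (- k\<^sup>2 / (8 * real n)) + exp (- r * k / (2 * real n)) \<le> 2 / (real n)\<^sup>2"
    using large unfolding large_arm_count_def p_def[symmetric] k_def r_def by simp_all
  have "2 / (real n)\<^sup>2 < \<delta> / 2" using \<delta> \<open>2 \<le> n\<close> by (simp add: field_simps)
  have "aba_guarantee lam n \<delta> (1 - slack lam) (\<delta> / 8) (\<delta> / (8 * real n ^ 2)) (p - \<delta> / 8)"
    unfolding p_def
  proof (rule aba_guaranteeI[OF lam large small \<delta>(1)])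
    show "0 \<le> slack lam - \<delta> / 8" "\<delta> / 8 + (slack lam - \<delta> / 8) \<le> 1/2"
      using p \<delta> unfolding p_def by simp_all
    have "\<delta> / 8 + (slack lam - \<delta> / 8) = slack lam" by simp
    then show "(\<Sum>i<num_rounds n (\<delta> / 8 + (slack lam - \<delta> / 8)). real (Suc i) * (\<delta> / 8 + (slack lam - \<delta> / 8)) ^ i)
        \<le> 1 / (1 - slack lam)\<^sup>2"
      using p unfolding p_def by (simp only:) (rule sum_Suc_mult_power_le; simp)
    fix \<epsilon> D
    assume "aba_analysis n D (1 - slack lam) (\<delta> / 8) (\<delta> / (8 * real n ^ 2)) (slack lam - \<delta> / 8) \<epsilon>"
    then interpret aba_analysis n D "1 - slack lam" "\<delta> / 8" "\<delta> / (8 * real n ^ 2)" "slack lam - \<delta> / 8" \<epsilon> .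
    have keep_eq: "keep = p" unfolding keep_def p_def by simp
    have "k \<le> real (kept rounds)"
      using round_size_num_rounds_ge[of p n] p \<open>2 \<le> n\<close> unfolding kept_def rounds_def keep_eq k_def by simp
    have "real (rand_set_size n) \<ge> r"
      unfolding rand_set_size_def r_def by linarith
    show "aba_learns n (1 - slack lam) (\<delta> / 8) (\<delta> / (8 * real n ^ 2)) (slack lam - \<delta> / 8) \<epsilon> \<delta> D"
    proof (rule aba_learns_multi_round)
      show "\<delta> / 8 \<le> keep / 8" using p keep_eq by simp
      show "2 \<le> kept rounds" using \<open>2 \<le> k\<close> \<open>k \<le> real (kept rounds)\<close> by linarith
      have "real rounds * exp (- (real (kept rounds))\<^sup>2 / (8 * real n))
          + exp (- real (rand_set_size n) * real (kept rounds) / (2 * real n))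
          \<le> real n * exp (- k\<^sup>2 / (8 * real n)) + exp (- r * k / (2 * real n))"
        using rounds_le \<open>2 \<le> k\<close> \<open>k \<le> real (kept rounds)\<close> \<open>0 \<le> r\<close> \<open>r \<le> real (rand_set_size n)\<close>
          \<open>2 \<le> n\<close> by (intro exp_tails_mono) auto
      moreover have "2 * real n ^ 2 * (\<delta> / (8 * real n ^ 2)) = \<delta> / 4" using \<open>2 \<le> n\<close> by simp
      ultimately show "2 * (\<delta> / 8) + real rounds * exp (- (real (kept rounds))\<^sup>2 / (8 * real n))
          + exp (- real (rand_set_size n) * real (kept rounds) / (2 * real n))
          + 2 * real n ^ 2 * (\<delta> / (8 * real n ^ 2)) \<le> \<delta>"
        using tail \<open>2 / (real n)\<^sup>2 < \<delta> / 2\<close> by linarith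
    qed
  qed
  then show ?thesis unfolding p_def .
qed

theorem theorem2:
  fixes lam :: real
  assumes "lam > 0"
  shows "\<exists>\<delta>0 > 0. \<exists>n0 :: nat. \<forall>\<delta> n. 0 < \<delta> \<and> \<delta> < \<delta>0 \<and> n \<ge> n0 \<longrightarrow>
           (\<exists>\<alpha> \<delta>' \<delta>'' \<phi>. 0 < \<alpha> \<and> \<alpha> < 1 \<and> 0 < \<delta>' \<and> 0 < \<delta>'' \<and> 0 \<le> \<phi> \<and> \<delta>' + \<phi> < 1 \<and>
              (\<forall>\<epsilon> D. 0 < \<epsilon> \<and> \<epsilon> < 1 \<and> bandit_instance n D \<longrightarrow>
                 aba_learns n \<alpha> \<delta>' \<delta>'' \<phi> \<epsilon> \<delta> D \<and>
                 (\<forall>R \<in> rand_sets n. \<forall>X.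
                    real (aba_samples n \<alpha> \<delta>' \<delta>'' \<phi> \<epsilon> R X)
                      \<le> (2 + lam) * real n / \<epsilon>\<^sup>2 * ln (1 / \<delta>))))"
proof -
  obtain n0 where large: "\<And>n. n0 \<le> n \<Longrightarrow> large_arm_count lam n"
    using eventually_large_arm_count[OF assms] unfolding eventually_sequentially by blast
  obtain \<delta>0 where "0 < \<delta>0" and small: "\<And>\<delta>. 0 < \<delta> \<Longrightarrow> \<delta> < \<delta>0 \<Longrightarrow> small_confidence lam \<delta>"
    using small_confidence_near_0[OF assms] by blast
  have "\<exists>\<alpha> \<delta>' \<delta>'' \<phi>. aba_guarantee lam n \<delta> \<alpha> \<delta>' \<delta>'' \<phi>" if "0 < \<delta>" "\<delta> < \<delta>0" "n0 \<le> n" for \<delta> n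
  proof (cases "real n ^ 2 * \<delta> \<le> 4")
    case True
    with aba_guarantee_single_round[OF assms large small] that show ?thesis by blast
  next
    case False
    with aba_guarantee_multi_round[OF assms large small] that show ?thesis by force
  qed
  then show ?thesis
    unfolding aba_guarantee_def using \<open>0 < \<delta>0\<close> by blast
qed

end
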